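(* (1) The region $\mathcal R(D_x,D_z)$ is convex. (2) The region $\mathcal R(D_x,D_z)$ is unchanged if, in its definition, the auxiliary alphabets are restricted to satisfy $|\mathcal U|\le|\mathcal Y|+4$, $|\mathcal V|\le|\mathcal Z||\mathcal U|+3$, $|\mathcal W|\le|\mathcal U||\mathcal V||\mathcal X|+1$.
   Context: Let $\mathcal X,\mathcal Y,\mathcal Z$ be finite alphabets and $(X,Y,Z)\sim p(x,y,z)=p(x,y)p(z|x)$ (so $Y-X-Z$ is Markov). Let $\hat{\mathcal X},\hat{\mathcal Z}$ be finite alphabets and $d_x:\mathcal X\times\hat{\mathcal X}\to[0,\infty)$, $d_z:\mathcal Z\times\hat{\mathcal Z}\to[0,\infty)$. $\mathcal R(D_x,D_z)$ is the set of all rate triples $(R_1,R_2,R_3)$ such that $R_1\ge I(Y;U|Z)$, $R_2\ge I(Z;V|U,X)$, $R_3\ge I(X;W|U,V,Z)$ for some finite-alphabet random variables $U\in\mathcal U,V\in\mathcal V,W\in\mathcal W$ with joint distribution $p(x,y,z,u,v,w)=p(x,y)p(z|x)p(u|y)p(v|u,z)p(w|u,v,x)$ and deterministic functions $\hat X(U,W,Z)$, $\hat Z(U,V,X)$ with $\mathbb E\, d_x(X,\hat X(U,W,Z))\le D_x$ and $\mathbb E\, d_z(Z,\hat Z(U,V,X))\le D_z$. *)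

theory Defs
  imports "HOL-Analysis.Analysis"
begin

text \<open>Discrete information measures on a finite outcome set Om with weights P.
  Entropies in bits; 0 log 0 = 0 holds since log 2 0 = 0 in Isabelle.\<close>

definition marg :: "'o set \<Rightarrow> ('o \<Rightarrow> real) \<Rightarrow> ('o \<Rightarrow> 'a) \<Rightarrow> 'a \<Rightarrow> real" where
  "marg Om P A a = (\<Sum>\<omega>\<in>{\<omega>\<in>Om. A \<omega> = a}. P \<omega>)"

definition ent :: "'o set \<Rightarrow> ('o \<Rightarrow> real) \<Rightarrow> ('o \<Rightarrow> 'a) \<Rightarrow> real" where
  "ent Om P A = - (\<Sum>a\<in>A ` Om. marg Om P A a * log 2 (marg Om P A a))"

definition cmi :: "'o set \<Rightarrow> ('o \<Rightarrow> real) \<Rightarrow> ('o \<Rightarrow> 'a) \<Rightarrow> ('o \<Rightarrow> 'b) \<Rightarrow> ('o \<Rightarrow> 'c) \<Rightarrow> real" where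
  "cmi Om P A B C = ent Om P (\<lambda>\<omega>. (A \<omega>, C \<omega>)) + ent Om P (\<lambda>\<omega>. (B \<omega>, C \<omega>))
                    - ent Om P (\<lambda>\<omega>. (A \<omega>, B \<omega>, C \<omega>)) - ent Om P C"

definition outcomes :: "nat \<Rightarrow> nat \<Rightarrow> nat \<Rightarrow> ('x::finite \<times> 'y::finite \<times> 'z::finite \<times> nat \<times> nat \<times> nat) set" where
  "outcomes nu nv nw = {(x,y,z,u,v,w). u < nu \<and> v < nv \<and> w < nw}"

definition joint ::
  "('x \<Rightarrow> 'y \<Rightarrow> real) \<Rightarrow> ('x \<Rightarrow> 'z \<Rightarrow> real) \<Rightarrow> ('y \<Rightarrow> nat \<Rightarrow> real)
   \<Rightarrow> (nat \<Rightarrow> 'z \<Rightarrow> nat \<Rightarrow> real) \<Rightarrow> (nat \<Rightarrow> nat \<Rightarrow> 'x \<Rightarrow> nat \<Rightarrow> real)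
   \<Rightarrow> ('x \<times> 'y \<times> 'z \<times> nat \<times> nat \<times> nat) \<Rightarrow> real" where
  "joint pxy pzx pu pv pw = (\<lambda>(x,y,z,u,v,w). pxy x y * pzx x z * pu y u * pv u z v * pw u v x w)"

text \<open>Rate region, with the auxiliary alphabet sizes restricted by the predicate Bd.
  pu y u = p(u|y), pv u z v = p(v|u,z), pw u v x w = p(w|u,v,x).\<close>
definition region_bd ::
  "(nat \<Rightarrow> nat \<Rightarrow> nat \<Rightarrow> bool) \<Rightarrow> ('x::finite \<Rightarrow> 'y::finite \<Rightarrow> real) \<Rightarrow> ('x \<Rightarrow> 'z::finite \<Rightarrow> real)
   \<Rightarrow> ('x \<Rightarrow> 'xh \<Rightarrow> real) \<Rightarrow> ('z \<Rightarrow> 'zh \<Rightarrow> real) \<Rightarrow> real \<Rightarrow> real \<Rightarrow> (real \<times> real \<times> real) set" where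
  "region_bd Bd pxy pzx dx dz Dx Dz =
    {(R1, R2, R3). \<exists>nu nv nw pu pv pw (xhat :: nat \<Rightarrow> nat \<Rightarrow> 'z \<Rightarrow> 'xh) (zhat :: nat \<Rightarrow> nat \<Rightarrow> 'x \<Rightarrow> 'zh).
       Bd nu nv nw \<and>
       (\<forall>y u. 0 \<le> pu y u) \<and> (\<forall>y. (\<Sum>u<nu. pu y u) = 1) \<and>
       (\<forall>u z v. 0 \<le> pv u z v) \<and> (\<forall>u<nu. \<forall>z. (\<Sum>v<nv. pv u z v) = 1) \<and>
       (\<forall>u v x w. 0 \<le> pw u v x w) \<and> (\<forall>u<nu. \<forall>v<nv. \<forall>x. (\<Sum>w<nw. pw u v x w) = 1) \<and>
       (let Om = outcomes nu nv nw; P = joint pxy pzx pu pv pw;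
            X = (\<lambda>(x,y,z,u,v,w). x); Y = (\<lambda>(x,y,z,u,v,w). y); Z = (\<lambda>(x,y,z,u,v,w). z);
            U = (\<lambda>(x,y,z,u,v,w). u); V = (\<lambda>(x,y,z,u,v,w). v); W = (\<lambda>(x,y,z,u,v,w). w) in
        R1 \<ge> cmi Om P Y U Z \<and>
        R2 \<ge> cmi Om P Z V (\<lambda>\<omega>. (U \<omega>, X \<omega>)) \<and>
        R3 \<ge> cmi Om P X W (\<lambda>\<omega>. (U \<omega>, V \<omega>, Z \<omega>)) \<and>
        (\<Sum>\<omega>\<in>Om. P \<omega> * dx (X \<omega>) (xhat (U \<omega>) (W \<omega>) (Z \<omega>))) \<le> Dx \<and>
        (\<Sum>\<omega>\<in>Om. P \<omega> * dz (Z \<omega>) (zhat (U \<omega>) (V \<omega>) (X \<omega>))) \<le> Dz)}"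

definition region where
  "region = region_bd (\<lambda>_ _ _. True)"

end

theory Submission
  imports Defs
begin

text \<open>Convexity follows from time sharing: two schemes are put side by side in the alphabet
  of \<open>U\<close>, on which every rate and both distortions condition, and weighting the two halves by
  \<open>a\<close> and \<open>b\<close> is a reweighting of the kernel of \<open>U\<close>, under which all five quantities are
  affine.  The cardinality bounds reduce \<open>U\<close>, \<open>V\<close>, \<open>W\<close> in turn: reweighting the kernel of one
  auxiliary variable so that it stays stochastic keeps the earlier quantities fixed and changes the
  others affinely, so by Carath\'eodory's argument all but (number of kernel rows) + (number of
  other constraints) outputs can be given weight zero without increasing the rate being minimised;
  these outputs are then relabelled away.\<close>

section \<open>Support reduction for linear constraints\<close>

lemma homogeneous_system_nontrivial_solution:
  fixes f :: "'i \<Rightarrow> 'e \<Rightarrow> real"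
  assumes "finite E" "finite S" "card E < card S"
  shows "\<exists>\<theta>. (\<exists>i\<in>S. \<theta> i \<noteq> 0) \<and> (\<forall>e\<in>E. (\<Sum>i\<in>S. \<theta> i * f i e) = 0)"
  using assms
proof (induction E arbitrary: S f rule: finite_induct)
  case empty
  then obtain i where "i \<in> S" by fastforce
  then show ?case by (intro exI[of _ "\<lambda>_. 1"]) auto
next
  case (insert e E)
  show ?case
  proof (cases "\<forall>i\<in>S. f i e = 0")
    case True
    from insert.IH[of S f] insert.prems insert.hyps obtain \<theta> where
      "\<exists>i\<in>S. \<theta> i \<noteq> 0" "\<forall>x\<in>E. (\<Sum>i\<in>S. \<theta> i * f i x) = 0"
      by auto
    with True show ?thesis by (intro exI[of _ \<theta>]) auto
  next
    case False
    then obtain i0 where i0: "i0 \<in> S" "f i0 e \<noteq> 0" by auto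
    \<comment> \<open>Gaussian elimination: the unknown at \<open>i0\<close> absorbs the equation for \<open>e\<close>.\<close>
    define g where "g i x = f i x - f i e / f i0 e * f i0 x" for i x
    have "card E < card (S - {i0})" using insert.prems insert.hyps i0 by auto
    from insert.IH[OF _ this, of g] insert.prems obtain \<theta>' where \<theta>': "\<exists>i\<in>S - {i0}. \<theta>' i \<noteq> 0"
        "\<forall>x\<in>E. (\<Sum>i\<in>S - {i0}. \<theta>' i * g i x) = 0"
      by auto
    define \<theta> where
      "\<theta> i = (if i = i0 then - (\<Sum>j\<in>S - {i0}. \<theta>' j * f j e) / f i0 e else \<theta>' i)" for i
    have split: "(\<Sum>i\<in>S. \<theta> i * f i x) = \<theta> i0 * f i0 x + (\<Sum>i\<in>S - {i0}. \<theta>' i * f i x)" for x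
    proof -
      have "(\<Sum>i\<in>S - {i0}. \<theta> i * f i x) = (\<Sum>i\<in>S - {i0}. \<theta>' i * f i x)"
        by (rule sum.cong) (auto simp: \<theta>_def)
      with i0 insert.prems show ?thesis by (simp add: sum.remove)
    qed
    have "(\<Sum>i\<in>S. \<theta> i * f i x) = 0" if "x \<in> insert e E" for x
    proof (cases "x = e")
      case True
      then show ?thesis using i0 unfolding split by (simp add: \<theta>_def)
    next
      case False
      have "(\<Sum>i\<in>S - {i0}. \<theta>' i * f i x) = (\<Sum>i\<in>S - {i0}. \<theta>' i * g i x)
             + (\<Sum>i\<in>S - {i0}. \<theta>' i * f i e) / f i0 e * f i0 x"
        by (simp add: g_def algebra_simps sum_subtractf sum_distrib_left sum_distrib_right
            sum_divide_distrib)
      with False that \<theta>'(2) show ?thesis unfolding split by (simp add: \<theta>_def)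
    qed
    moreover have "\<exists>i\<in>S. \<theta> i \<noteq> 0" using \<theta>'(1) by (auto simp: \<theta>_def)
    ultimately show ?thesis by blast
  qed
qed

lemma ratio_test:
  fixes lam \<theta> :: "'i \<Rightarrow> real"
  assumes "finite S" "\<forall>i\<in>S. 0 < lam i" "\<exists>i\<in>S. 0 < \<theta> i"
  obtains t i0 where "0 < t" "i0 \<in> S" "t * \<theta> i0 = lam i0" "\<forall>i\<in>S. t * \<theta> i \<le> lam i"
proof -
  define P where "P = {i\<in>S. 0 < \<theta> i}"
  have P: "finite P" "P \<noteq> {}" using assms by (auto simp: P_def)
  define t where "t = Min ((\<lambda>i. lam i / \<theta> i) ` P)"
  have "t \<in> (\<lambda>i. lam i / \<theta> i) ` P" unfolding t_def using P by (intro Min_in) auto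
  then obtain i0 where i0: "i0 \<in> P" "t = lam i0 / \<theta> i0" by auto
  have t_pos: "0 < t" using i0 assms(2) by (simp add: P_def)
  have "t * \<theta> i \<le> lam i" if "i \<in> S" for i
  proof (cases "i \<in> P")
    case True
    then have "t \<le> lam i / \<theta> i" using P by (auto simp: t_def)
    with True show ?thesis by (simp add: P_def pos_le_divide_eq)
  next
    case False
    with that have "t * \<theta> i \<le> 0" using t_pos by (simp add: P_def mult_nonneg_nonpos)
    then show ?thesis using assms(2) that by (meson less_imp_le order_trans)
  qed
  then show ?thesis using that t_pos i0 by (auto simp: P_def)
qed

lemma homogeneous_system_positive_solution:
  fixes a :: "'i \<Rightarrow> 'j \<Rightarrow> real" and c :: "'i \<Rightarrow> 'k \<Rightarrow> real" and ob :: "'i \<Rightarrow> real"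
  assumes fin: "finite S" "finite J" "finite K" and card: "card J + card K < card S"
    and pos: "\<forall>i\<in>S. 0 < (\<Sum>j\<in>J. a i j)"
  obtains \<theta> where "\<exists>i\<in>S. 0 < \<theta> i" "\<forall>j\<in>J. (\<Sum>i\<in>S. \<theta> i * a i j) = 0"
    "\<forall>k\<in>K. (\<Sum>i\<in>S. \<theta> i * c i k) = 0" "0 \<le> (\<Sum>i\<in>S. \<theta> i * ob i)"
proof -
  define f where "f i e = (case e of Inl j \<Rightarrow> a i j | Inr k \<Rightarrow> c i k)" for i e
  have "card (J <+> K) < card S" using card fin by (simp add: card_Plus)
  then obtain \<theta>0 where \<theta>0: "\<exists>i\<in>S. \<theta>0 i \<noteq> 0" "\<forall>e\<in>J <+> K. (\<Sum>i\<in>S. \<theta>0 i * f i e) = 0"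
    using homogeneous_system_nontrivial_solution[of "J <+> K" S f] fin by auto
  define sg :: real where "sg = (if 0 \<le> (\<Sum>i\<in>S. \<theta>0 i * ob i) then 1 else -1)"
  define \<theta> where "\<theta> i = sg * \<theta>0 i" for i
  have sum_\<theta>: "(\<Sum>i\<in>S. \<theta> i * g i) = sg * (\<Sum>i\<in>S. \<theta>0 i * g i)" for g
    by (simp add: \<theta>_def sum_distrib_left mult.assoc)
  have a0: "\<forall>j\<in>J. (\<Sum>i\<in>S. \<theta> i * a i j) = 0"
    using \<theta>0(2) by (auto simp: sum_\<theta> f_def dest: bspec[of _ _ "Inl _"])
  have c0: "\<forall>k\<in>K. (\<Sum>i\<in>S. \<theta> i * c i k) = 0"
    using \<theta>0(2) by (auto simp: sum_\<theta> f_def dest: bspec[of _ _ "Inr _"])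
  have ob: "0 \<le> (\<Sum>i\<in>S. \<theta> i * ob i)" by (simp add: sum_\<theta> sg_def)
  have "\<exists>i\<in>S. 0 < \<theta> i"
  proof (rule ccontr)
    assume "\<not> ?thesis"
    then have nonpos: "\<theta> i * (\<Sum>j\<in>J. a i j) \<le> 0" if "i \<in> S" for i
      using that pos by (meson mult_nonpos_nonneg not_less less_imp_le)
    obtain i1 where "i1 \<in> S" "\<theta> i1 \<noteq> 0" using \<theta>0(1) by (auto simp: \<theta>_def sg_def)
    with \<open>\<not> ?thesis\<close> pos have "\<theta> i1 * (\<Sum>j\<in>J. a i1 j) < 0"
      by (meson linorder_neqE_linordered_idom mult_neg_pos)
    then have "(\<Sum>i\<in>S. \<theta> i * (\<Sum>j\<in>J. a i j)) < 0"
      using sum_strict_mono_ex1[OF fin(1), of "\<lambda>i. \<theta> i * (\<Sum>j\<in>J. a i j)" "\<lambda>_. 0"]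
        nonpos \<open>i1 \<in> S\<close> by auto
    moreover have "(\<Sum>i\<in>S. \<theta> i * (\<Sum>j\<in>J. a i j)) = 0"
      using a0 by (simp add: sum_distrib_left) (subst sum.swap, simp)
    ultimately show False by simp
  qed
  with a0 c0 ob that show ?thesis by blast
qed

lemma support_reduction_step:
  fixes a :: "'i \<Rightarrow> 'j \<Rightarrow> real" and c :: "'i \<Rightarrow> 'k \<Rightarrow> real" and ob :: "'i \<Rightarrow> real"
  assumes fin: "finite I" "finite J" "finite K"
    and lam: "\<forall>i\<in>I. 0 \<le> lam i" "\<forall>i\<in>I. lam i \<noteq> 0 \<longrightarrow> 0 < (\<Sum>j\<in>J. a i j)"
    and big: "card J + card K < card {i\<in>I. lam i \<noteq> 0}"
  obtains lam' where "\<forall>i\<in>I. 0 \<le> lam' i" "{i\<in>I. lam' i \<noteq> 0} \<subset> {i\<in>I. lam i \<noteq> 0}"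
    "\<forall>j\<in>J. (\<Sum>i\<in>I. lam' i * a i j) = (\<Sum>i\<in>I. lam i * a i j)"
    "\<forall>k\<in>K. (\<Sum>i\<in>I. lam' i * c i k) = (\<Sum>i\<in>I. lam i * c i k)"
    "(\<Sum>i\<in>I. lam' i * ob i) \<le> (\<Sum>i\<in>I. lam i * ob i)"
proof -
  define S where "S = {i\<in>I. lam i \<noteq> 0}"
  have S: "finite S" "S \<subseteq> I" using fin by (auto simp: S_def)
  have lam_pos: "\<forall>i\<in>S. 0 < lam i" using lam(1) unfolding S_def by (simp add: order_less_le)
  have pos: "\<forall>i\<in>S. 0 < (\<Sum>j\<in>J. a i j)" using lam(2) by (simp add: S_def)
  obtain \<theta> where \<theta>: "\<exists>i\<in>S. 0 < \<theta> i" "\<forall>j\<in>J. (\<Sum>i\<in>S. \<theta> i * a i j) = 0"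
      "\<forall>k\<in>K. (\<Sum>i\<in>S. \<theta> i * c i k) = 0" "0 \<le> (\<Sum>i\<in>S. \<theta> i * ob i)"
    by (rule homogeneous_system_positive_solution[OF S(1) fin(2,3) big[folded S_def] pos])
  obtain t i0 where t: "0 < t" "i0 \<in> S" "t * \<theta> i0 = lam i0" "\<forall>i\<in>S. t * \<theta> i \<le> lam i"
    using ratio_test[OF S(1) lam_pos \<theta>(1)] .
  define lam' where "lam' i = lam i - (if i \<in> S then t * \<theta> i else 0)" for i
  have lam'_sum: "(\<Sum>i\<in>I. lam' i * g i) = (\<Sum>i\<in>I. lam i * g i) - t * (\<Sum>i\<in>S. \<theta> i * g i)" for g
  proof -
    have "(\<Sum>i\<in>I. (if i \<in> S then t * \<theta> i else 0) * g i) = (\<Sum>i\<in>S. t * \<theta> i * g i)"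
      using S fin(1) by (intro sum.mono_neutral_cong_right) auto
    then show ?thesis
      by (simp add: lam'_def left_diff_distrib sum_subtractf sum_distrib_left mult.assoc)
  qed
  have "{i\<in>I. lam' i \<noteq> 0} \<subseteq> S - {i0}"
    using t(2,3) by (auto simp: lam'_def S_def)
  then have supp: "{i\<in>I. lam' i \<noteq> 0} \<subset> {i\<in>I. lam i \<noteq> 0}" using t(2) by (auto simp: S_def)
  have nonneg: "\<forall>i\<in>I. 0 \<le> lam' i" using t(4) lam(1) by (simp add: lam'_def)
  have "\<forall>j\<in>J. (\<Sum>i\<in>I. lam' i * a i j) = (\<Sum>i\<in>I. lam i * a i j)"
    "\<forall>k\<in>K. (\<Sum>i\<in>I. lam' i * c i k) = (\<Sum>i\<in>I. lam i * c i k)"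
    using \<theta>(2,3) by (simp_all add: lam'_sum)
  moreover have "(\<Sum>i\<in>I. lam' i * ob i) \<le> (\<Sum>i\<in>I. lam i * ob i)"
    using \<theta>(4) t(1) by (simp add: lam'_sum)
  ultimately show ?thesis by (intro that[OF nonneg supp])
qed

lemma support_reduction:
  fixes a :: "'i \<Rightarrow> 'j \<Rightarrow> real" and c :: "'i \<Rightarrow> 'k \<Rightarrow> real" and ob :: "'i \<Rightarrow> real"
  assumes fin: "finite I" "finite J" "finite K"
    and "\<forall>i\<in>I. 0 \<le> lam i" and "\<forall>i\<in>I. lam i \<noteq> 0 \<longrightarrow> 0 < (\<Sum>j\<in>J. a i j)"
  shows "\<exists>mu. (\<forall>i\<in>I. 0 \<le> mu i) \<and> card {i\<in>I. mu i \<noteq> 0} \<le> card J + card K \<and>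
      (\<forall>j\<in>J. (\<Sum>i\<in>I. mu i * a i j) = (\<Sum>i\<in>I. lam i * a i j)) \<and>
      (\<forall>k\<in>K. (\<Sum>i\<in>I. mu i * c i k) = (\<Sum>i\<in>I. lam i * c i k)) \<and>
      (\<Sum>i\<in>I. mu i * ob i) \<le> (\<Sum>i\<in>I. lam i * ob i)"
  using assms(4,5)
proof (induction "card {i\<in>I. lam i \<noteq> 0}" arbitrary: lam rule: less_induct)
  case less
  show ?case
  proof (cases "card {i\<in>I. lam i \<noteq> 0} \<le> card J + card K")
    case True
    then show ?thesis using less.prems by (intro exI[of _ lam]) auto
  next
    case False
    then have "card J + card K < card {i\<in>I. lam i \<noteq> 0}" by simp
    then obtain lam' where lam': "\<forall>i\<in>I. 0 \<le> lam' i" "{i\<in>I. lam' i \<noteq> 0} \<subset> {i\<in>I. lam i \<noteq> 0}"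
        "\<forall>j\<in>J. (\<Sum>i\<in>I. lam' i * a i j) = (\<Sum>i\<in>I. lam i * a i j)"
        "\<forall>k\<in>K. (\<Sum>i\<in>I. lam' i * c i k) = (\<Sum>i\<in>I. lam i * c i k)"
        "(\<Sum>i\<in>I. lam' i * ob i) \<le> (\<Sum>i\<in>I. lam i * ob i)"
      by (rule support_reduction_step[OF fin less.prems])
    have "card {i\<in>I. lam' i \<noteq> 0} < card {i\<in>I. lam i \<noteq> 0}"
      using psubset_card_mono[OF _ lam'(2)] fin(1) by simp
    moreover have "\<forall>i\<in>I. lam' i \<noteq> 0 \<longrightarrow> 0 < (\<Sum>j\<in>J. a i j)" using lam'(2) less.prems(2) by blast
    ultimately obtain mu where "(\<forall>i\<in>I. 0 \<le> mu i) \<and> card {i\<in>I. mu i \<noteq> 0} \<le> card J + card K \<and>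
      (\<forall>j\<in>J. (\<Sum>i\<in>I. mu i * a i j) = (\<Sum>i\<in>I. lam' i * a i j)) \<and>
      (\<forall>k\<in>K. (\<Sum>i\<in>I. mu i * c i k) = (\<Sum>i\<in>I. lam' i * c i k)) \<and>
      (\<Sum>i\<in>I. mu i * ob i) \<le> (\<Sum>i\<in>I. lam' i * ob i)"
      using less.hyps[OF _ lam'(1)] by blast
    with lam'(3-5) show ?thesis by (intro exI[of _ mu]) auto
  qed
qed

section \<open>Reweighting stochastic kernels\<close>

definition affine_on_weights :: "('i \<Rightarrow> real) set \<Rightarrow> 'i set \<Rightarrow> (('i \<Rightarrow> real) \<Rightarrow> real) \<Rightarrow> bool"
  where "affine_on_weights Rs I F \<longleftrightarrow> (\<exists>c \<gamma>. \<forall>r\<in>Rs. F r = c + (\<Sum>i\<in>I. r i * \<gamma> i))"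

definition stochastic_weights :: "nat \<Rightarrow> 'j set \<Rightarrow> ('j \<Rightarrow> nat \<Rightarrow> real) \<Rightarrow> (nat \<Rightarrow> real) set"
  where "stochastic_weights n J q = {r. (\<forall>i. 0 \<le> r i) \<and> (\<forall>j\<in>J. (\<Sum>i<n. r i * q j i) = 1)}"

definition depends_on_support ::
  "nat \<Rightarrow> 'j set \<Rightarrow> ('j \<Rightarrow> nat \<Rightarrow> real) \<Rightarrow> ((nat \<Rightarrow> real) \<Rightarrow> real) \<Rightarrow> bool"
  where "depends_on_support n J q F \<longleftrightarrow>
    (\<forall>r r'. (\<forall>i<n. (\<exists>j\<in>J. q j i \<noteq> 0) \<longrightarrow> r i = r' i) \<longrightarrow> F r = F r')"

lemma affine_on_weights_subset:
  "affine_on_weights Rs I F \<Longrightarrow> Rs' \<subseteq> Rs \<Longrightarrow> affine_on_weights Rs' I F"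
  unfolding affine_on_weights_def by (meson subsetD)

lemma affine_on_weights_add:
  assumes "affine_on_weights Rs I F" "affine_on_weights Rs I G"
  shows "affine_on_weights Rs I (\<lambda>r. F r + G r)"
proof -
  from assms obtain c \<gamma> d \<delta> where "\<forall>r\<in>Rs. F r = c + (\<Sum>i\<in>I. r i * \<gamma> i)"
    "\<forall>r\<in>Rs. G r = d + (\<Sum>i\<in>I. r i * \<delta> i)"
    unfolding affine_on_weights_def by blast
  then have "\<forall>r\<in>Rs. F r + G r = (c + d) + (\<Sum>i\<in>I. r i * (\<gamma> i + \<delta> i))"
    by (simp add: distrib_left sum.distrib)
  then show ?thesis unfolding affine_on_weights_def by (intro exI[of _ "c + d"] exI[of _ "\<lambda>i. \<gamma> i + \<delta> i"])
qed

lemma affine_on_weights_minus: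
  assumes "affine_on_weights Rs I F"
  shows "affine_on_weights Rs I (\<lambda>r. - F r)"
proof -
  from assms obtain c \<gamma> where "\<forall>r\<in>Rs. F r = c + (\<Sum>i\<in>I. r i * \<gamma> i)"
    unfolding affine_on_weights_def by blast
  then have "\<forall>r\<in>Rs. - F r = - c + (\<Sum>i\<in>I. r i * - \<gamma> i)" by (simp add: sum_negf)
  then show ?thesis unfolding affine_on_weights_def by (intro exI[of _ "- c"] exI[of _ "\<lambda>i. - \<gamma> i"])
qed

lemma affine_on_weights_diff:
  "affine_on_weights Rs I F \<Longrightarrow> affine_on_weights Rs I G \<Longrightarrow> affine_on_weights Rs I (\<lambda>r. F r - G r)"
  using affine_on_weights_add[OF _ affine_on_weights_minus[of Rs I G], of F] by simp

lemma affine_on_weights_const_on: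
  assumes "\<forall>r\<in>Rs. \<forall>r'\<in>Rs. F r = F r'"
  shows "affine_on_weights Rs I F"
proof (cases "Rs = {}")
  case False
  then obtain r0 where r0: "r0 \<in> Rs" by blast
  have "F r = F r0 + (\<Sum>i\<in>I. r i * 0)" if "r \<in> Rs" for r
  proof -
    from assms that r0 have "F r = F r0" by blast
    then show ?thesis by simp
  qed
  then show ?thesis unfolding affine_on_weights_def by (intro exI[of _ "F r0"] exI[of _ "\<lambda>_. 0"] ballI)
qed (simp add: affine_on_weights_def)

lemma affine_on_weights_cong:
  "affine_on_weights Rs I F \<Longrightarrow> (\<And>r. r \<in> Rs \<Longrightarrow> F r = G r) \<Longrightarrow> affine_on_weights Rs I G"
  unfolding affine_on_weights_def by auto

lemma affine_on_weights_shift: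
  assumes "affine_on_weights Rs I (\<lambda>r. F r - E r)" "\<forall>r\<in>Rs. \<forall>r'\<in>Rs. E r = E r'"
  shows "affine_on_weights Rs I F"
  using affine_on_weights_add[OF assms(1) affine_on_weights_const_on[OF assms(2)]]
  by (rule affine_on_weights_cong) simp

lemma affine_on_weights_convex_combination:
  assumes "affine_on_weights Rs I F" "r \<in> Rs" "r' \<in> Rs" "(\<lambda>i. a * r i + b * r' i) \<in> Rs" "a + b = 1"
  shows "F (\<lambda>i. a * r i + b * r' i) = a * F r + b * F r'"
proof -
  from assms(1) obtain c \<gamma> where F: "\<forall>r\<in>Rs. F r = c + (\<Sum>i\<in>I. r i * \<gamma> i)"
    unfolding affine_on_weights_def by blast
  have "F (\<lambda>i. a * r i + b * r' i) = c + (\<Sum>i\<in>I. (a * r i + b * r' i) * \<gamma> i)"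
    using F assms(4) by blast
  also have "\<dots> = (a + b) * c + a * (\<Sum>i\<in>I. r i * \<gamma> i) + b * (\<Sum>i\<in>I. r' i * \<gamma> i)"
    using assms(5) by (simp add: algebra_simps sum.distrib sum_distrib_left)
  also have "\<dots> = a * F r + b * F r'"
    using F assms(2,3) by (simp add: algebra_simps)
  finally show ?thesis .
qed

definition used_indicator :: "'j set \<Rightarrow> ('j \<Rightarrow> nat \<Rightarrow> real) \<Rightarrow> nat \<Rightarrow> real"
  where "used_indicator J q i = (if \<exists>j\<in>J. q j i \<noteq> 0 then 1 else 0)"

lemma used_indicator_weights:
  assumes fin: "finite J" and q: "\<forall>j\<in>J. \<forall>i<n. 0 \<le> q j i" and one: "(\<lambda>_. 1) \<in> stochastic_weights n J q"
  shows "used_indicator J q \<in> stochastic_weights n J q"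
    and "\<forall>i\<in>{..<n}. used_indicator J q i \<noteq> 0 \<longrightarrow> 0 < (\<Sum>j\<in>J. q j i)"
    and "depends_on_support n J q H \<Longrightarrow> H (used_indicator J q) = H (\<lambda>_. 1)"
proof -
  have used: "used_indicator J q i * q j i = q j i" if "j \<in> J" for i j
    using that by (auto simp: used_indicator_def)
  show "used_indicator J q \<in> stochastic_weights n J q"
    using one by (simp add: stochastic_weights_def used) (simp add: used_indicator_def)
  show "\<forall>i\<in>{..<n}. used_indicator J q i \<noteq> 0 \<longrightarrow> 0 < (\<Sum>j\<in>J. q j i)"
  proof (intro ballI impI)
    fix i assume "i \<in> {..<n}" "used_indicator J q i \<noteq> 0"
    then obtain j where "j \<in> J" "q j i \<noteq> 0" "i < n" by (auto simp: used_indicator_def split: if_splits)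
    with q show "0 < (\<Sum>j\<in>J. q j i)" by (intro sum_pos2[OF fin, of j]) (auto simp: order_less_le)
  qed
  show "H (used_indicator J q) = H (\<lambda>_. 1)" if "depends_on_support n J q H"
    using that unfolding depends_on_support_def by (simp add: used_indicator_def)
qed

text \<open>Outputs used by no row are first given weight zero, which is harmless because the
  functionals depend only on the weights of used outputs.\<close>

lemma caratheodory_reweighting:
  fixes q :: "'j \<Rightarrow> nat \<Rightarrow> real" and F :: "(nat \<Rightarrow> real) \<Rightarrow> real"
    and Gs :: "((nat \<Rightarrow> real) \<Rightarrow> real) set"
  assumes fin: "finite J" "finite Gs" and q: "\<forall>j\<in>J. \<forall>i<n. 0 \<le> q j i"
    and one: "(\<lambda>_. 1) \<in> stochastic_weights n J q"
    and F: "affine_on_weights (stochastic_weights n J q) {..<n} F" "depends_on_support n J q F"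
    and G: "\<forall>G\<in>Gs. affine_on_weights (stochastic_weights n J q) {..<n} G \<and> depends_on_support n J q G"
  shows "\<exists>m\<in>stochastic_weights n J q. card {i\<in>{..<n}. m i \<noteq> 0} \<le> card J + card Gs \<and>
    F m \<le> F (\<lambda>_. 1) \<and> (\<forall>G\<in>Gs. G m = G (\<lambda>_. 1))"
proof -
  let ?Rs = "stochastic_weights n J q"
  let ?r0 = "used_indicator J q"
  note r0 = used_indicator_weights[OF fin(1) q one]
  obtain cF \<gamma>F where \<gamma>F: "\<forall>r\<in>?Rs. F r = cF + (\<Sum>i<n. r i * \<gamma>F i)"
    using F(1) unfolding affine_on_weights_def by blast
  obtain cG \<gamma>G where \<gamma>G: "\<forall>G\<in>Gs. \<forall>r\<in>?Rs. G r = cG G + (\<Sum>i<n. r i * \<gamma>G G i)"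
    using G unfolding affine_on_weights_def by metis
  have r0_nonneg: "\<forall>i\<in>{..<n}. 0 \<le> ?r0 i" by (simp add: used_indicator_def)
  obtain mu where mu: "\<forall>i\<in>{..<n}. 0 \<le> mu i" "card {i\<in>{..<n}. mu i \<noteq> 0} \<le> card J + card Gs"
      "\<forall>j\<in>J. (\<Sum>i<n. mu i * q j i) = (\<Sum>i<n. ?r0 i * q j i)"
      "\<forall>G\<in>Gs. (\<Sum>i<n. mu i * \<gamma>G G i) = (\<Sum>i<n. ?r0 i * \<gamma>G G i)"
      "(\<Sum>i<n. mu i * \<gamma>F i) \<le> (\<Sum>i<n. ?r0 i * \<gamma>F i)"
    using support_reduction[where c = "\<lambda>i G. \<gamma>G G i" and ob = \<gamma>F,
        OF finite_lessThan[of n] fin r0_nonneg r0(2)] by blast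
  define m where "m i = (if i < n then mu i else 0)" for i
  have m_sum: "(\<Sum>i<n. m i * g i) = (\<Sum>i<n. mu i * g i)" for g by (simp add: m_def)
  have "m \<in> ?Rs" using mu(1,3) r0(1) by (auto simp: stochastic_weights_def m_def m_sum)
  moreover have "card {i\<in>{..<n}. m i \<noteq> 0} \<le> card J + card Gs"
    using mu(2) by (simp add: m_def conj_commute cong: conj_cong)
  moreover have "F m \<le> F (\<lambda>_. 1)"
    using \<gamma>F \<open>m \<in> ?Rs\<close> r0(1) mu(5) r0(3)[OF F(2)] by (simp add: m_sum)
  moreover have "G m = G (\<lambda>_. 1)" if "G \<in> Gs" for G
  proof -
    have "G m = cG G + (\<Sum>i<n. m i * \<gamma>G G i)" using \<gamma>G \<open>m \<in> ?Rs\<close> that by blast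
    also have "\<dots> = cG G + (\<Sum>i<n. ?r0 i * \<gamma>G G i)" using mu(4) that by (simp add: m_sum)
    also have "\<dots> = G ?r0" using \<gamma>G r0(1) that by metis
    also have "\<dots> = G (\<lambda>_. 1)" using r0(3) G that by blast
    finally show ?thesis .
  qed
  ultimately show ?thesis by blast
qed

section \<open>Entropy and conditional mutual information\<close>

lemma marg_nonneg: "\<forall>\<omega>\<in>Om. 0 \<le> P \<omega> \<Longrightarrow> 0 \<le> marg Om P A a"
  unfolding marg_def by (auto intro: sum_nonneg)

lemma sum_marg:
  assumes "finite Om"
  shows "(\<Sum>a\<in>A ` Om. marg Om P A a * f a) = (\<Sum>\<omega>\<in>Om. P \<omega> * f (A \<omega>))"
proof -
  have "(\<Sum>a\<in>A ` Om. marg Om P A a * f a) = (\<Sum>a\<in>A ` Om. \<Sum>\<omega>\<in>{\<omega>\<in>Om. A \<omega> = a}. P \<omega> * f (A \<omega>))"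
    unfolding marg_def by (simp add: sum_distrib_right)
  also have "\<dots> = (\<Sum>\<omega>\<in>Om. P \<omega> * f (A \<omega>))"
    using sum.image_gen[OF assms, of "\<lambda>\<omega>. P \<omega> * f (A \<omega>)" A] by simp
  finally show ?thesis .
qed

lemma marg_cong: "\<forall>\<omega>\<in>Om. P \<omega> = Q \<omega> \<Longrightarrow> marg Om P A a = marg Om Q A a"
  unfolding marg_def by (rule sum.cong) auto

lemma ent_cong: "\<forall>\<omega>\<in>Om. P \<omega> = Q \<omega> \<Longrightarrow> ent Om P A = ent Om Q A"
  unfolding ent_def by (simp only: marg_cong)

lemma cmi_cong: "\<forall>\<omega>\<in>Om. P \<omega> = Q \<omega> \<Longrightarrow> cmi Om P A B C = cmi Om Q A B C"
  unfolding cmi_def by (simp only: ent_cong)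

text \<open>Values outside the range of \<open>A\<close> have mass zero and contribute \<open>0 * log 2 0 = 0\<close>.\<close>

lemma ent_sum_superset:
  assumes "finite V" "A ` Om \<subseteq> V"
  shows "ent Om P A = - (\<Sum>a\<in>V. marg Om P A a * log 2 (marg Om P A a))"
proof -
  have "marg Om P A a = 0" if "a \<in> V - A ` Om" for a
    using that unfolding marg_def by (intro sum.neutral) auto
  then show ?thesis
    unfolding ent_def using assms by (intro arg_cong[of _ _ uminus] sum.mono_neutral_left) auto
qed

lemma ent_inj_image:
  assumes "inj_on f (A ` Om)"
  shows "ent Om P (\<lambda>\<omega>. f (A \<omega>)) = ent Om P A"
proof -
  have marg: "marg Om P (\<lambda>\<omega>. f (A \<omega>)) (f a) = marg Om P A a" if "a \<in> A ` Om" for a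
  proof -
    have "{\<omega>\<in>Om. f (A \<omega>) = f a} = {\<omega>\<in>Om. A \<omega> = a}"
      using assms that by (auto dest: inj_onD)
    then show ?thesis by (simp add: marg_def)
  qed
  have "(\<lambda>\<omega>. f (A \<omega>)) ` Om = f ` A ` Om" by (simp add: image_image)
  then show ?thesis
    unfolding ent_def using assms by (simp add: sum.reindex marg cong: sum.cong)
qed

lemma ent_embed:
  assumes "finite Ob" "h ` Oa \<subseteq> Ob" "inj_on h Oa" "\<forall>\<omega>\<in>Ob - h ` Oa. P \<omega> = 0"
  shows "ent Oa (\<lambda>\<omega>. P (h \<omega>)) (\<lambda>\<omega>. A (h \<omega>)) = ent Ob P A"
proof -
  have marg: "marg Oa (\<lambda>\<omega>. P (h \<omega>)) (\<lambda>\<omega>. A (h \<omega>)) a = marg Ob P A a" for a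
  proof -
    have "marg Ob P A a = (\<Sum>\<omega>\<in>h ` {\<omega>\<in>Oa. A (h \<omega>) = a}. P \<omega>)"
      unfolding marg_def using assms by (intro sum.mono_neutral_right) auto
    also have "\<dots> = marg Oa (\<lambda>\<omega>. P (h \<omega>)) (\<lambda>\<omega>. A (h \<omega>)) a"
      unfolding marg_def using assms(3) by (simp add: sum.reindex inj_on_def)
    finally show ?thesis ..
  qed
  have "(\<lambda>\<omega>. A (h \<omega>)) ` Oa \<subseteq> A ` Ob" using assms(2) by auto
  then have "ent Oa (\<lambda>\<omega>. P (h \<omega>)) (\<lambda>\<omega>. A (h \<omega>))
      = - (\<Sum>a\<in>A ` Ob. marg Ob P A a * log 2 (marg Ob P A a))"
    using assms(1) unfolding marg[symmetric] by (intro ent_sum_superset) auto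
  then show ?thesis by (simp add: ent_def)
qed

lemma cmi_inj_image:
  assumes "inj_on f (A ` Om)" "inj_on g (B ` Om)" "inj_on h (C ` Om)"
  shows "cmi Om P (\<lambda>\<omega>. f (A \<omega>)) (\<lambda>\<omega>. g (B \<omega>)) (\<lambda>\<omega>. h (C \<omega>)) = cmi Om P A B C"
proof -
  have inj2: "inj_on (map_prod k l) ((\<lambda>\<omega>. (K \<omega>, L \<omega>)) ` Om)"
    if "inj_on k (K ` Om)" "inj_on l (L ` Om)" for k l and K :: "_ \<Rightarrow> 'k" and L :: "_ \<Rightarrow> 'l"
    by (rule inj_on_subset[OF map_prod_inj_on[OF that]]) auto
  have "ent Om P (\<lambda>\<omega>. map_prod k l (K \<omega>, L \<omega>)) = ent Om P (\<lambda>\<omega>. (K \<omega>, L \<omega>))"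
    if "inj_on k (K ` Om)" "inj_on l (L ` Om)" for k l and K :: "_ \<Rightarrow> 'k" and L :: "_ \<Rightarrow> 'l"
    by (rule ent_inj_image[OF inj2[OF that]])
  note pair = this[simplified]
  have triple: "ent Om P (\<lambda>\<omega>. (f (A \<omega>), g (B \<omega>), h (C \<omega>))) = ent Om P (\<lambda>\<omega>. (A \<omega>, B \<omega>, C \<omega>))"
    using pair[OF assms(1) inj2[OF assms(2,3)]] by simp
  show ?thesis
    unfolding cmi_def pair[OF assms(1,3)] pair[OF assms(2,3)] triple ent_inj_image[OF assms(3)] ..
qed

lemma cmi_embed:
  assumes "finite Ob" "h ` Oa \<subseteq> Ob" "inj_on h Oa" "\<forall>\<omega>\<in>Ob - h ` Oa. P \<omega> = 0"
  shows "cmi Oa (\<lambda>\<omega>. P (h \<omega>)) (\<lambda>\<omega>. A (h \<omega>)) (\<lambda>\<omega>. B (h \<omega>)) (\<lambda>\<omega>. C (h \<omega>)) = cmi Ob P A B C"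
  unfolding cmi_def using ent_embed[OF assms, of "\<lambda>\<omega>. (A \<omega>, C \<omega>)"]
    ent_embed[OF assms, of "\<lambda>\<omega>. (B \<omega>, C \<omega>)"] ent_embed[OF assms, of "\<lambda>\<omega>. (A \<omega>, B \<omega>, C \<omega>)"]
    ent_embed[OF assms, of C] by simp

lemma sum_embed:
  fixes P F :: "'o \<Rightarrow> real"
  assumes "finite Ob" "h ` Oa \<subseteq> Ob" "inj_on h Oa" "\<forall>\<omega>\<in>Ob - h ` Oa. P \<omega> = 0"
  shows "(\<Sum>\<omega>\<in>Oa. P (h \<omega>) * F (h \<omega>)) = (\<Sum>\<omega>\<in>Ob. P \<omega> * F \<omega>)"
proof -
  have "(\<Sum>\<omega>\<in>Ob. P \<omega> * F \<omega>) = (\<Sum>\<omega>\<in>h ` Oa. P \<omega> * F \<omega>)"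
    using assms by (intro sum.mono_neutral_right) auto
  also have "\<dots> = (\<Sum>\<omega>\<in>Oa. P (h \<omega>) * F (h \<omega>))"
    using assms(3) by (simp add: sum.reindex)
  finally show ?thesis ..
qed

lemma cmi_transport:
  assumes emb: "finite Ob" "h ` Oa \<subseteq> Ob" "inj_on h Oa" "\<forall>\<omega>\<in>Ob - h ` Oa. P' \<omega> = 0"
    and P: "\<forall>\<omega>\<in>Oa. P \<omega> = P' (h \<omega>)"
    and inj: "inj_on f (A ` Oa)" "inj_on g (B ` Oa)" "inj_on k (C ` Oa)"
    and vars: "\<And>\<omega>. A' (h \<omega>) = f (A \<omega>)" "\<And>\<omega>. B' (h \<omega>) = g (B \<omega>)" "\<And>\<omega>. C' (h \<omega>) = k (C \<omega>)"
  shows "cmi Oa P A B C = cmi Ob P' A' B' C'"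
proof -
  have "cmi Oa P A B C = cmi Oa (\<lambda>\<omega>. P' (h \<omega>)) (\<lambda>\<omega>. f (A \<omega>)) (\<lambda>\<omega>. g (B \<omega>)) (\<lambda>\<omega>. k (C \<omega>))"
    using cmi_cong[OF P] cmi_inj_image[OF inj] by simp
  also have "\<dots> = cmi Ob P' A' B' C'"
    using cmi_embed[OF emb, of A' B' C'] by (simp add: vars)
  finally show ?thesis .
qed

section \<open>Information measures under reweighting\<close>

lemma xlogx_mult:
  fixes r m :: real
  assumes "0 \<le> r" "0 \<le> m"
  shows "(r * m) * log 2 (r * m) = r * (m * log 2 m) + m * (r * log 2 r)"
proof (cases "r = 0 \<or> m = 0")
  case False
  with assms have "0 < r" "0 < m" by auto
  then show ?thesis by (simp add: log_mult algebra_simps)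
qed auto

lemma sum_regroup:
  fixes r :: "'i \<Rightarrow> real"
  assumes "finite I" "finite Bs" "g ` Bs \<subseteq> I"
  shows "(\<Sum>b\<in>Bs. r (g b) * \<phi> b) = (\<Sum>i\<in>I. r i * (\<Sum>b\<in>{b\<in>Bs. g b = i}. \<phi> b))"
proof -
  have "(\<Sum>b\<in>Bs. r (g b) * \<phi> b) = (\<Sum>i\<in>g ` Bs. r i * (\<Sum>b\<in>{b\<in>Bs. g b = i}. \<phi> b))"
    unfolding sum.image_gen[OF assms(2), of "\<lambda>b. r (g b) * \<phi> b" g]
    by (auto simp: sum_distrib_left intro!: sum.cong)
  also have "\<dots> = (\<Sum>i\<in>I. r i * (\<Sum>b\<in>{b\<in>Bs. g b = i}. \<phi> b))"
  proof (rule sum.mono_neutral_left)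
    show "\<forall>i\<in>I - g ` Bs. r i * (\<Sum>b\<in>{b\<in>Bs. g b = i}. \<phi> b) = 0"
      by (auto intro!: sum.neutral)
  qed (use assms in auto)
  finally show ?thesis .
qed

text \<open>The correction \<open>\<Sum>\<omega>\<in>Om. P \<omega> * (r (G \<omega>) * log 2 (r (G \<omega>)))\<close> cancels in every conditional
  mutual information whose four entropies all determine \<open>G\<close>.\<close>

lemma ent_reweight_affine:
  fixes P :: "'o \<Rightarrow> real" and G :: "'o \<Rightarrow> 'i"
  assumes fin: "finite Om" "finite I" and GI: "G ` Om \<subseteq> I" and P: "\<forall>\<omega>\<in>Om. 0 \<le> P \<omega>"
    and G: "\<forall>\<omega>\<in>Om. G \<omega> = g (B \<omega>)"
  shows "affine_on_weights {r. \<forall>i. 0 \<le> r i} I (\<lambda>r. ent Om (\<lambda>\<omega>. r (G \<omega>) * P \<omega>) B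
    + (\<Sum>\<omega>\<in>Om. P \<omega> * (r (G \<omega>) * log 2 (r (G \<omega>)))))"
proof -
  let ?\<phi> = "\<lambda>b. marg Om P B b * log 2 (marg Om P B b)"
  let ?\<gamma> = "\<lambda>i. - (\<Sum>b\<in>{b\<in>B ` Om. g b = i}. ?\<phi> b)"
  have "ent Om (\<lambda>\<omega>. r (G \<omega>) * P \<omega>) B + (\<Sum>\<omega>\<in>Om. P \<omega> * (r (G \<omega>) * log 2 (r (G \<omega>))))
      = 0 + (\<Sum>i\<in>I. r i * ?\<gamma> i)" if r: "\<forall>i. 0 \<le> r i" for r
  proof -
    have marg: "marg Om (\<lambda>\<omega>. r (G \<omega>) * P \<omega>) B b = r (g b) * marg Om P B b" for b
      unfolding marg_def sum_distrib_left by (rule sum.cong) (use G in auto)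
    have "ent Om (\<lambda>\<omega>. r (G \<omega>) * P \<omega>) B
        = - (\<Sum>b\<in>B ` Om. r (g b) * ?\<phi> b + marg Om P B b * (r (g b) * log 2 (r (g b))))"
      unfolding ent_def marg
      by (intro arg_cong[of _ _ uminus] sum.cong refl xlogx_mult) (use r marg_nonneg[OF P] in auto)
    also have "\<dots> = - (\<Sum>b\<in>B ` Om. r (g b) * ?\<phi> b)
        - (\<Sum>\<omega>\<in>Om. P \<omega> * (r (G \<omega>) * log 2 (r (G \<omega>))))"
      using G by (simp add: sum.distrib sum_marg[OF fin(1)] cong: sum.cong)
    also have "(\<Sum>b\<in>B ` Om. r (g b) * ?\<phi> b) = (\<Sum>i\<in>I. r i * (\<Sum>b\<in>{b\<in>B ` Om. g b = i}. ?\<phi> b))"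
      using GI G fin by (intro sum_regroup) force+
    finally show ?thesis by (simp add: sum_negf)
  qed
  then show ?thesis unfolding affine_on_weights_def by (intro exI[of _ 0] exI[of _ ?\<gamma>]) blast
qed

lemma cmi_reweight_cond_affine:
  fixes P :: "'o \<Rightarrow> real" and G :: "'o \<Rightarrow> 'i"
  assumes "finite Om" "finite I" "G ` Om \<subseteq> I" "\<forall>\<omega>\<in>Om. 0 \<le> P \<omega>" "\<forall>\<omega>\<in>Om. G \<omega> = g (C \<omega>)"
  shows "affine_on_weights {r. \<forall>i. 0 \<le> r i} I (\<lambda>r. cmi Om (\<lambda>\<omega>. r (G \<omega>) * P \<omega>) A B C)"
proof -
  let ?H = "\<lambda>X r. ent Om (\<lambda>\<omega>. r (G \<omega>) * P \<omega>) X + (\<Sum>\<omega>\<in>Om. P \<omega> * (r (G \<omega>) * log 2 (r (G \<omega>))))"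
  have "affine_on_weights {r. \<forall>i. 0 \<le> r i} I
      (\<lambda>r. ?H (\<lambda>\<omega>. (A \<omega>, C \<omega>)) r + ?H (\<lambda>\<omega>. (B \<omega>, C \<omega>)) r - ?H (\<lambda>\<omega>. (A \<omega>, B \<omega>, C \<omega>)) r - ?H C r)"
    using assms by (intro affine_on_weights_diff affine_on_weights_add ent_reweight_affine
        [where g = "\<lambda>x. g (snd x)"] ent_reweight_affine[where g = "\<lambda>x. g (snd (snd x))"]
        ent_reweight_affine[where g = g]) auto
  then show ?thesis by (rule affine_on_weights_cong) (simp add: cmi_def)
qed

lemma cmi_reweight_affine:
  fixes P :: "'o \<Rightarrow> real" and G :: "'o \<Rightarrow> 'i"
  assumes "finite Om" "finite I" "G ` Om \<subseteq> I" "\<forall>\<omega>\<in>Om. 0 \<le> P \<omega>" "\<forall>\<omega>\<in>Om. G \<omega> = g (B \<omega>)"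
  shows "affine_on_weights {r. \<forall>i. 0 \<le> r i} I (\<lambda>r. cmi Om (\<lambda>\<omega>. r (G \<omega>) * P \<omega>) A B C
    - (ent Om (\<lambda>\<omega>. r (G \<omega>) * P \<omega>) (\<lambda>\<omega>. (A \<omega>, C \<omega>)) - ent Om (\<lambda>\<omega>. r (G \<omega>) * P \<omega>) C))"
proof -
  let ?H = "\<lambda>X r. ent Om (\<lambda>\<omega>. r (G \<omega>) * P \<omega>) X + (\<Sum>\<omega>\<in>Om. P \<omega> * (r (G \<omega>) * log 2 (r (G \<omega>))))"
  have "affine_on_weights {r. \<forall>i. 0 \<le> r i} I
      (\<lambda>r. ?H (\<lambda>\<omega>. (B \<omega>, C \<omega>)) r - ?H (\<lambda>\<omega>. (A \<omega>, B \<omega>, C \<omega>)) r)"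
    using assms by (intro affine_on_weights_diff ent_reweight_affine[where g = "\<lambda>x. g (fst x)"]
        ent_reweight_affine[where g = "\<lambda>x. g (fst (snd x))"]) auto
  then show ?thesis by (rule affine_on_weights_cong) (simp add: cmi_def)
qed

lemma sum_reweight_affine:
  fixes P F :: "'o \<Rightarrow> real" and G :: "'o \<Rightarrow> 'i"
  assumes "finite Om" "finite I" "G ` Om \<subseteq> I"
  shows "affine_on_weights Rs I (\<lambda>r. \<Sum>\<omega>\<in>Om. r (G \<omega>) * P \<omega> * F \<omega>)"
proof -
  have "(\<Sum>\<omega>\<in>Om. r (G \<omega>) * P \<omega> * F \<omega>) = 0 + (\<Sum>i\<in>I. r i * (\<Sum>\<omega>\<in>{\<omega>\<in>Om. G \<omega> = i}. P \<omega> * F \<omega>))" for r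
    using sum_regroup[OF assms(2,1,3), of r "\<lambda>\<omega>. P \<omega> * F \<omega>"] by (simp add: mult.assoc)
  then show ?thesis unfolding affine_on_weights_def
    by (intro exI[of _ 0] exI[of _ "\<lambda>i. \<Sum>\<omega>\<in>{\<omega>\<in>Om. G \<omega> = i}. P \<omega> * F \<omega>"] ballI)
qed

section \<open>Outcomes, kernels and the information quantities of a scheme\<close>

definition varX :: "'x \<times> 'y \<times> 'z \<times> nat \<times> nat \<times> nat \<Rightarrow> 'x" where "varX = (\<lambda>(x,y,z,u,v,w). x)"
definition varY :: "'x \<times> 'y \<times> 'z \<times> nat \<times> nat \<times> nat \<Rightarrow> 'y" where "varY = (\<lambda>(x,y,z,u,v,w). y)"
definition varZ :: "'x \<times> 'y \<times> 'z \<times> nat \<times> nat \<times> nat \<Rightarrow> 'z" where "varZ = (\<lambda>(x,y,z,u,v,w). z)"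
definition varU :: "'x \<times> 'y \<times> 'z \<times> nat \<times> nat \<times> nat \<Rightarrow> nat" where "varU = (\<lambda>(x,y,z,u,v,w). u)"
definition varV :: "'x \<times> 'y \<times> 'z \<times> nat \<times> nat \<times> nat \<Rightarrow> nat" where "varV = (\<lambda>(x,y,z,u,v,w). v)"
definition varW :: "'x \<times> 'y \<times> 'z \<times> nat \<times> nat \<times> nat \<Rightarrow> nat" where "varW = (\<lambda>(x,y,z,u,v,w). w)"

lemma var_simps [simp]:
  "varX (x,y,z,u,v,w) = x" "varY (x,y,z,u,v,w) = y" "varZ (x,y,z,u,v,w) = z"
  "varU (x,y,z,u,v,w) = u" "varV (x,y,z,u,v,w) = v" "varW (x,y,z,u,v,w) = w"
  by (simp_all add: varX_def varY_def varZ_def varU_def varV_def varW_def)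

definition kernel_u :: "nat \<Rightarrow> ('y \<Rightarrow> nat \<Rightarrow> real) \<Rightarrow> bool" where
  "kernel_u nu pu \<longleftrightarrow> (\<forall>y u. 0 \<le> pu y u) \<and> (\<forall>y. (\<Sum>u<nu. pu y u) = 1)"

definition kernel_v :: "nat \<Rightarrow> nat \<Rightarrow> (nat \<Rightarrow> 'z \<Rightarrow> nat \<Rightarrow> real) \<Rightarrow> bool" where
  "kernel_v nu nv pv \<longleftrightarrow> (\<forall>u z v. 0 \<le> pv u z v) \<and> (\<forall>u<nu. \<forall>z. (\<Sum>v<nv. pv u z v) = 1)"

definition kernel_w :: "nat \<Rightarrow> nat \<Rightarrow> nat \<Rightarrow> (nat \<Rightarrow> nat \<Rightarrow> 'x \<Rightarrow> nat \<Rightarrow> real) \<Rightarrow> bool" where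
  "kernel_w nu nv nw pw \<longleftrightarrow>
    (\<forall>u v x w. 0 \<le> pw u v x w) \<and> (\<forall>u<nu. \<forall>v<nv. \<forall>x. (\<Sum>w<nw. pw u v x w) = 1)"

definition rate_u :: "('x \<times> 'y \<times> 'z \<times> nat \<times> nat \<times> nat) set \<Rightarrow> ('x \<times> 'y \<times> 'z \<times> nat \<times> nat \<times> nat \<Rightarrow> real) \<Rightarrow> real"
  where "rate_u Om P = cmi Om P varY varU varZ"

definition rate_v :: "('x \<times> 'y \<times> 'z \<times> nat \<times> nat \<times> nat) set \<Rightarrow> ('x \<times> 'y \<times> 'z \<times> nat \<times> nat \<times> nat \<Rightarrow> real) \<Rightarrow> real"
  where "rate_v Om P = cmi Om P varZ varV (\<lambda>\<omega>. (varU \<omega>, varX \<omega>))"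

definition rate_w :: "('x \<times> 'y \<times> 'z \<times> nat \<times> nat \<times> nat) set \<Rightarrow> ('x \<times> 'y \<times> 'z \<times> nat \<times> nat \<times> nat \<Rightarrow> real) \<Rightarrow> real"
  where "rate_w Om P = cmi Om P varX varW (\<lambda>\<omega>. (varU \<omega>, varV \<omega>, varZ \<omega>))"

definition expect :: "'o set \<Rightarrow> ('o \<Rightarrow> real) \<Rightarrow> ('o \<Rightarrow> real) \<Rightarrow> real"
  where "expect Om P f = (\<Sum>\<omega>\<in>Om. P \<omega> * f \<omega>)"

lemma rates_cong:
  assumes "\<forall>\<omega>\<in>Om. P \<omega> = Q \<omega>"
  shows "rate_u Om P = rate_u Om Q" "rate_v Om P = rate_v Om Q" "rate_w Om P = rate_w Om Q"
    and "expect Om P f = expect Om Q f"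
  using assms by (simp_all add: rate_u_def rate_v_def rate_w_def expect_def cmi_cong)

lemma outcomes_eq: "outcomes nu nv nw = UNIV \<times> UNIV \<times> UNIV \<times> {..<nu} \<times> {..<nv} \<times> {..<nw}"
  unfolding outcomes_def by auto

lemma finite_outcomes [simp]:
  "finite (outcomes nu nv nw :: ('x::finite \<times> 'y::finite \<times> 'z::finite \<times> nat \<times> nat \<times> nat) set)"
  unfolding outcomes_eq by simp

lemma mem_outcomes [simp]: "(x,y,z,u,v,w) \<in> outcomes nu nv nw \<longleftrightarrow> u < nu \<and> v < nv \<and> w < nw"
  unfolding outcomes_def by simp

lemma sum_outcomes:
  "(\<Sum>\<omega>\<in>outcomes nu nv nw. F \<omega>) =
   (\<Sum>x\<in>UNIV. \<Sum>y\<in>UNIV. \<Sum>z\<in>UNIV. \<Sum>u<nu. \<Sum>v<nv. \<Sum>w<nw. F (x,y,z,u,v,w))"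
  unfolding outcomes_eq by (simp add: sum.cartesian_product split_def)

lemma joint_apply [simp]:
  "joint pxy pzx pu pv pw (x,y,z,u,v,w) = pxy x y * pzx x z * pu y u * pv u z v * pw u v x w"
  unfolding joint_def by simp

lemma sum_joint_drop_w:
  fixes F :: "'x::finite \<times> 'y::finite \<times> 'z::finite \<times> nat \<times> nat \<times> nat \<Rightarrow> real"
  assumes W: "kernel_w nu nv nw pw" and F: "\<forall>x y z u v w. F (x,y,z,u,v,w) = F (x,y,z,u,v,0)"
  shows "(\<Sum>\<omega>\<in>outcomes nu nv nw. joint pxy pzx pu pv pw \<omega> * F \<omega>) =
    (\<Sum>x\<in>UNIV. \<Sum>y\<in>UNIV. \<Sum>z\<in>UNIV. \<Sum>u<nu. \<Sum>v<nv. pxy x y * pzx x z * pu y u * pv u z v * F (x,y,z,u,v,0))"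
  unfolding sum_outcomes
proof (intro sum.cong refl)
  fix x y z u v assume "u \<in> {..<nu}" "v \<in> {..<nv}"
  with W have one: "(\<Sum>w<nw. pw u v x w) = 1" by (simp add: kernel_w_def)
  have "joint pxy pzx pu pv pw (x,y,z,u,v,w) * F (x,y,z,u,v,w)
      = pxy x y * pzx x z * pu y u * pv u z v * F (x,y,z,u,v,0) * pw u v x w" for w
    by (subst F[rule_format, of x y z u v w]) (simp add: mult_ac)
  then show "(\<Sum>w<nw. joint pxy pzx pu pv pw (x,y,z,u,v,w) * F (x,y,z,u,v,w))
      = pxy x y * pzx x z * pu y u * pv u z v * F (x,y,z,u,v,0)"
    by (simp only: sum_distrib_left[symmetric] one mult_1_right)
qed

lemma sum_joint_drop_v:
  fixes F :: "'x::finite \<times> 'y::finite \<times> 'z::finite \<times> nat \<times> nat \<times> nat \<Rightarrow> real"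
  assumes V: "kernel_v nu nv pv" and W: "kernel_w nu nv nw pw"
    and F: "\<forall>x y z u v w. F (x,y,z,u,v,w) = F (x,y,z,u,0,0)"
  shows "(\<Sum>\<omega>\<in>outcomes nu nv nw. joint pxy pzx pu pv pw \<omega> * F \<omega>) =
    (\<Sum>x\<in>UNIV. \<Sum>y\<in>UNIV. \<Sum>z\<in>UNIV. \<Sum>u<nu. pxy x y * pzx x z * pu y u * F (x,y,z,u,0,0))"
proof -
  have "\<forall>x y z u v w. F (x,y,z,u,v,w) = F (x,y,z,u,v,0)" using F by metis
  note drop_w = sum_joint_drop_w[OF W this]
  show ?thesis unfolding drop_w
  proof (intro sum.cong refl)
    fix x y z u assume "u \<in> {..<nu}"
    with V have one: "(\<Sum>v<nv. pv u z v) = 1" by (simp add: kernel_v_def)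
    have "pxy x y * pzx x z * pu y u * pv u z v * F (x,y,z,u,v,0)
        = pxy x y * pzx x z * pu y u * F (x,y,z,u,0,0) * pv u z v" for v
      by (subst F[rule_format, of x y z u v 0]) (simp add: mult_ac)
    then show "(\<Sum>v<nv. pxy x y * pzx x z * pu y u * pv u z v * F (x,y,z,u,v,0))
        = pxy x y * pzx x z * pu y u * F (x,y,z,u,0,0)"
      by (simp only: sum_distrib_left[symmetric] one mult_1_right)
  qed
qed

lemma sum_joint_drop_u:
  fixes F :: "'x::finite \<times> 'y::finite \<times> 'z::finite \<times> nat \<times> nat \<times> nat \<Rightarrow> real"
  assumes U: "kernel_u nu pu" and V: "kernel_v nu nv pv" and W: "kernel_w nu nv nw pw"
    and F: "\<forall>x y z u v w. F (x,y,z,u,v,w) = F (x,y,z,0,0,0)"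
  shows "(\<Sum>\<omega>\<in>outcomes nu nv nw. joint pxy pzx pu pv pw \<omega> * F \<omega>) =
    (\<Sum>x\<in>UNIV. \<Sum>y\<in>UNIV. \<Sum>z\<in>UNIV. pxy x y * pzx x z * F (x,y,z,0,0,0))"
proof -
  have "\<forall>x y z u v w. F (x,y,z,u,v,w) = F (x,y,z,u,0,0)" using F by metis
  note drop_v = sum_joint_drop_v[OF V W this]
  show ?thesis unfolding drop_v
  proof (intro sum.cong refl)
    fix x y z
    from U have one: "(\<Sum>u<nu. pu y u) = 1" by (simp add: kernel_u_def)
    have "pxy x y * pzx x z * pu y u * F (x,y,z,u,0,0)
        = pxy x y * pzx x z * F (x,y,z,0,0,0) * pu y u" for u
      by (subst F[rule_format, of x y z u 0 0]) (simp add: mult_ac)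
    then show "(\<Sum>u<nu. pxy x y * pzx x z * pu y u * F (x,y,z,u,0,0))
        = pxy x y * pzx x z * F (x,y,z,0,0,0)"
      by (simp only: sum_distrib_left[symmetric] one mult_1_right)
  qed
qed

lemma marg_as_sum: "finite Om \<Longrightarrow> marg Om P A a = (\<Sum>\<omega>\<in>Om. P \<omega> * (if A \<omega> = a then 1 else 0))"
  unfolding marg_def by (simp add: sum.inter_filter[symmetric] if_distrib cong: if_cong)

lemma ent_eqI_marg: "(\<And>a. marg Om P A a = marg Om Q A a) \<Longrightarrow> ent Om P A = ent Om Q A"
  unfolding ent_def by simp

lemma ent_joint_indep_w:
  fixes A :: "'x::finite \<times> 'y::finite \<times> 'z::finite \<times> nat \<times> nat \<times> nat \<Rightarrow> 'a"
  assumes "kernel_w nu nv nw pw" "kernel_w nu nv nw pw'"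
    and "\<forall>x y z u v w. A (x,y,z,u,v,w) = A (x,y,z,u,v,0)"
  shows "ent (outcomes nu nv nw) (joint pxy pzx pu pv pw) A = ent (outcomes nu nv nw) (joint pxy pzx pu pv pw') A"
proof (rule ent_eqI_marg)
  fix a
  have ind: "\<forall>x y z u v w. (if A (x,y,z,u,v,w) = a then 1 else 0) = (if A (x,y,z,u,v,0) = a then 1 else 0 :: real)"
    by (metis assms(3))
  then show "marg (outcomes nu nv nw) (joint pxy pzx pu pv pw) A a = marg (outcomes nu nv nw) (joint pxy pzx pu pv pw') A a"
    unfolding marg_as_sum[OF finite_outcomes]
    by (simp only: sum_joint_drop_w[where F = "\<lambda>\<omega>. if A \<omega> = a then 1 else 0", OF assms(1) ind]
        sum_joint_drop_w[where F = "\<lambda>\<omega>. if A \<omega> = a then 1 else 0", OF assms(2) ind])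
qed

lemma ent_joint_indep_v:
  fixes A :: "'x::finite \<times> 'y::finite \<times> 'z::finite \<times> nat \<times> nat \<times> nat \<Rightarrow> 'a"
  assumes "kernel_v nu nv pv" "kernel_v nu nv pv'" "kernel_w nu nv nw pw" "kernel_w nu nv nw pw'"
    and "\<forall>x y z u v w. A (x,y,z,u,v,w) = A (x,y,z,u,0,0)"
  shows "ent (outcomes nu nv nw) (joint pxy pzx pu pv pw) A = ent (outcomes nu nv nw) (joint pxy pzx pu pv' pw') A"
proof (rule ent_eqI_marg)
  fix a
  have ind: "\<forall>x y z u v w. (if A (x,y,z,u,v,w) = a then 1 else 0) = (if A (x,y,z,u,0,0) = a then 1 else 0 :: real)"
    by (metis assms(5))
  then show "marg (outcomes nu nv nw) (joint pxy pzx pu pv pw) A a = marg (outcomes nu nv nw) (joint pxy pzx pu pv' pw') A a"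
    unfolding marg_as_sum[OF finite_outcomes]
    by (simp only: sum_joint_drop_v[where F = "\<lambda>\<omega>. if A \<omega> = a then 1 else 0", OF assms(1,3) ind]
        sum_joint_drop_v[where F = "\<lambda>\<omega>. if A \<omega> = a then 1 else 0", OF assms(2,4) ind])
qed

lemma ent_joint_indep_u:
  fixes A :: "'x::finite \<times> 'y::finite \<times> 'z::finite \<times> nat \<times> nat \<times> nat \<Rightarrow> 'a"
  assumes "kernel_u nu pu" "kernel_u nu pu'" "kernel_v nu nv pv" "kernel_v nu nv pv'"
    "kernel_w nu nv nw pw" "kernel_w nu nv nw pw'"
    and "\<forall>x y z u v w. A (x,y,z,u,v,w) = A (x,y,z,0,0,0)"
  shows "ent (outcomes nu nv nw) (joint pxy pzx pu pv pw) A = ent (outcomes nu nv nw) (joint pxy pzx pu' pv' pw') A"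
proof (rule ent_eqI_marg)
  fix a
  have ind: "\<forall>x y z u v w. (if A (x,y,z,u,v,w) = a then 1 else 0) = (if A (x,y,z,0,0,0) = a then 1 else 0 :: real)"
    by (metis assms(7))
  then show "marg (outcomes nu nv nw) (joint pxy pzx pu pv pw) A a = marg (outcomes nu nv nw) (joint pxy pzx pu' pv' pw') A a"
    unfolding marg_as_sum[OF finite_outcomes]
    by (simp only: sum_joint_drop_u[where F = "\<lambda>\<omega>. if A \<omega> = a then 1 else 0", OF assms(1,3,5) ind]
        sum_joint_drop_u[where F = "\<lambda>\<omega>. if A \<omega> = a then 1 else 0", OF assms(2,4,6) ind])
qed

lemma rates_indep_w:
  fixes pxy :: "'x::finite \<Rightarrow> 'y::finite \<Rightarrow> real" and pzx :: "'x \<Rightarrow> 'z::finite \<Rightarrow> real"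
  assumes "kernel_w nu nv nw pw" "kernel_w nu nv nw pw'"
  shows "rate_u (outcomes nu nv nw) (joint pxy pzx pu pv pw) = rate_u (outcomes nu nv nw) (joint pxy pzx pu pv pw')"
    and "rate_v (outcomes nu nv nw) (joint pxy pzx pu pv pw) = rate_v (outcomes nu nv nw) (joint pxy pzx pu pv pw')"
  unfolding rate_u_def rate_v_def cmi_def by (simp_all add: ent_joint_indep_w[OF assms])

lemma rate_u_indep_v:
  fixes pxy :: "'x::finite \<Rightarrow> 'y::finite \<Rightarrow> real" and pzx :: "'x \<Rightarrow> 'z::finite \<Rightarrow> real"
  assumes "kernel_v nu nv pv" "kernel_v nu nv pv'" "kernel_w nu nv nw pw" "kernel_w nu nv nw pw'"
  shows "rate_u (outcomes nu nv nw) (joint pxy pzx pu pv pw) = rate_u (outcomes nu nv nw) (joint pxy pzx pu pv' pw')"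
  unfolding rate_u_def cmi_def by (simp add: ent_joint_indep_v[OF assms])

lemma expect_indep_w:
  fixes pxy :: "'x::finite \<Rightarrow> 'y::finite \<Rightarrow> real" and pzx :: "'x \<Rightarrow> 'z::finite \<Rightarrow> real"
  assumes "kernel_w nu nv nw pw" "kernel_w nu nv nw pw'" "\<forall>x y z u v w. f (x,y,z,u,v,w) = f (x,y,z,u,v,0)"
  shows "expect (outcomes nu nv nw) (joint pxy pzx pu pv pw) f = expect (outcomes nu nv nw) (joint pxy pzx pu pv pw') f"
  unfolding expect_def sum_joint_drop_w[OF assms(1,3)] sum_joint_drop_w[OF assms(2,3)] ..

definition relabel ::
  "(nat \<Rightarrow> nat) \<Rightarrow> (nat \<Rightarrow> nat) \<Rightarrow> (nat \<Rightarrow> nat) \<Rightarrow> 'x \<times> 'y \<times> 'z \<times> nat \<times> nat \<times> nat \<Rightarrow> 'x \<times> 'y \<times> 'z \<times> nat \<times> nat \<times> nat"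
  where "relabel eu ev ew = (\<lambda>(x,y,z,u,v,w). (x, y, z, eu u, ev v, ew w))"

lemma relabel_apply [simp]: "relabel eu ev ew (x,y,z,u,v,w) = (x, y, z, eu u, ev v, ew w)"
  by (simp add: relabel_def)

lemma var_relabel [simp]:
  "varX (relabel eu ev ew \<omega>) = varX \<omega>" "varY (relabel eu ev ew \<omega>) = varY \<omega>"
  "varZ (relabel eu ev ew \<omega>) = varZ \<omega>" "varU (relabel eu ev ew \<omega>) = eu (varU \<omega>)"
  "varV (relabel eu ev ew \<omega>) = ev (varV \<omega>)" "varW (relabel eu ev ew \<omega>) = ew (varW \<omega>)"
  by (cases \<omega>; simp)+

lemma relabel_invariant:
  fixes P P' :: "'x::finite \<times> 'y::finite \<times> 'z::finite \<times> nat \<times> nat \<times> nat \<Rightarrow> real"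
  assumes inj: "inj_on eu {..<nu}" "inj_on ev {..<nv}" "inj_on ew {..<nw}"
    and into: "eu ` {..<nu} \<subseteq> {..<nu'}" "ev ` {..<nv} \<subseteq> {..<nv'}" "ew ` {..<nw} \<subseteq> {..<nw'}"
    and zero: "\<forall>\<omega>\<in>outcomes nu' nv' nw' - relabel eu ev ew ` outcomes nu nv nw. P' \<omega> = 0"
    and P: "\<forall>\<omega>\<in>outcomes nu nv nw. P \<omega> = P' (relabel eu ev ew \<omega>)"
  shows "rate_u (outcomes nu nv nw) P = rate_u (outcomes nu' nv' nw') P'"
    and "rate_v (outcomes nu nv nw) P = rate_v (outcomes nu' nv' nw') P'"
    and "rate_w (outcomes nu nv nw) P = rate_w (outcomes nu' nv' nw') P'"
    and "(\<And>\<omega>. \<omega> \<in> outcomes nu nv nw \<Longrightarrow> g \<omega> = f (relabel eu ev ew \<omega>)) \<Longrightarrow>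
      expect (outcomes nu nv nw) P g = expect (outcomes nu' nv' nw') P' f"
proof -
  let ?Oa = "outcomes nu nv nw :: ('x \<times> 'y \<times> 'z \<times> nat \<times> nat \<times> nat) set"
  let ?h = "relabel eu ev ew :: 'x \<times> 'y \<times> 'z \<times> nat \<times> nat \<times> nat \<Rightarrow> _"
  have emb: "finite (outcomes nu' nv' nw' :: ('x \<times> 'y \<times> 'z \<times> nat \<times> nat \<times> nat) set)"
    "?h ` ?Oa \<subseteq> outcomes nu' nv' nw'" "inj_on ?h ?Oa"
    using inj into by (simp, auto simp: outcomes_def inj_on_def)
  note transport = cmi_transport[OF emb zero P]
  have U: "varU ` ?Oa \<subseteq> {..<nu}" and V: "varV ` ?Oa \<subseteq> {..<nv}" and W: "varW ` ?Oa \<subseteq> {..<nw}"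
    by (auto simp: outcomes_def)
  have inj_UX: "inj_on (map_prod eu id) ((\<lambda>\<omega>. (varU \<omega>, varX \<omega>)) ` ?Oa)"
    by (rule inj_on_subset[OF map_prod_inj_on[OF inj(1) inj_on_id[of UNIV]]]) (auto simp: outcomes_def)
  have inj_UVZ: "inj_on (map_prod eu (map_prod ev id)) ((\<lambda>\<omega>. (varU \<omega>, varV \<omega>, varZ \<omega>)) ` ?Oa)"
    by (rule inj_on_subset[OF map_prod_inj_on[OF inj(1) map_prod_inj_on[OF inj(2) inj_on_id[of UNIV]]]])
      (auto simp: outcomes_def)
  show "rate_u ?Oa P = rate_u (outcomes nu' nv' nw') P'"
    unfolding rate_u_def by (rule transport[of id _ eu _ id]) (auto intro: inj_on_subset[OF inj(1) U])
  show "rate_v ?Oa P = rate_v (outcomes nu' nv' nw') P'"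
    unfolding rate_v_def
    by (rule transport[of id _ ev _ "map_prod eu id"]) (auto intro: inj_on_subset[OF inj(2) V] inj_UX)
  show "rate_w ?Oa P = rate_w (outcomes nu' nv' nw') P'"
    unfolding rate_w_def
    by (rule transport[of id _ ew _ "map_prod eu (map_prod ev id)"])
      (auto intro: inj_on_subset[OF inj(3) W] inj_UVZ)
  show "expect ?Oa P g = expect (outcomes nu' nv' nw') P' f" if "\<And>\<omega>. \<omega> \<in> ?Oa \<Longrightarrow> g \<omega> = f (?h \<omega>)"
    unfolding expect_def using P that sum_embed[OF emb zero, of f] by (simp cong: sum.cong)
qed

lemma sum_bij_lessThan:
  fixes e :: "nat \<Rightarrow> nat"
  assumes "bij_betw e {..<m} T" "T \<subseteq> {..<n}" "\<forall>i<n. i \<notin> T \<longrightarrow> f i = 0"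
  shows "(\<Sum>k<m. f (e k)) = (\<Sum>i<n. f i)"
proof -
  have "(\<Sum>k<m. f (e k)) = (\<Sum>i\<in>T. f i)" using sum.reindex_bij_betw[OF assms(1)] by simp
  also have "\<dots> = (\<Sum>i<n. f i)" using assms(2,3) by (intro sum.mono_neutral_left) auto
  finally show ?thesis .
qed

lemma kernel_relabel:
  assumes U: "kernel_u nu pu" and V: "kernel_v nu nv pv" and W: "kernel_w nu nv nw pw"
    and eu: "bij_betw eu {..<mu} Tu" "Tu \<subseteq> {..<nu}" "\<forall>y. \<forall>u<nu. u \<notin> Tu \<longrightarrow> pu y u = 0"
    and ev: "bij_betw ev {..<mv} Tv" "Tv \<subseteq> {..<nv}" "\<forall>u<nu. \<forall>z. \<forall>v<nv. v \<notin> Tv \<longrightarrow> pv u z v = 0"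
    and ew: "bij_betw ew {..<mw} Tw" "Tw \<subseteq> {..<nw}"
      "\<forall>u<nu. \<forall>v<nv. \<forall>x. \<forall>w<nw. w \<notin> Tw \<longrightarrow> pw u v x w = 0"
  shows "kernel_u mu (\<lambda>y k. pu y (eu k))" and "kernel_v mu mv (\<lambda>k z j. pv (eu k) z (ev j))"
    and "kernel_w mu mv mw (\<lambda>k j x l. pw (eu k) (ev j) x (ew l))"
proof -
  have "(\<Sum>k<mu. pu y (eu k)) = 1" for y
    using sum_bij_lessThan[OF eu(1,2), of "pu y"] eu(3) U by (simp add: kernel_u_def)
  then show "kernel_u mu (\<lambda>y k. pu y (eu k))" using U by (simp add: kernel_u_def)
  have into: "\<forall>k<mu. eu k < nu" "\<forall>j<mv. ev j < nv" using eu ev by (auto simp: bij_betw_def)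
  have "(\<Sum>j<mv. pv (eu k) z (ev j)) = 1" if "k < mu" for k z
    using sum_bij_lessThan[OF ev(1,2), of "pv (eu k) z"] ev(3) V into(1) that
    by (simp add: kernel_v_def)
  then show "kernel_v mu mv (\<lambda>k z j. pv (eu k) z (ev j))" using V by (simp add: kernel_v_def)
  have "(\<Sum>l<mw. pw (eu k) (ev j) x (ew l)) = 1" if "k < mu" "j < mv" for k j x
    using sum_bij_lessThan[OF ew(1,2), of "pw (eu k) (ev j) x"] ew(3) W into that
    by (simp add: kernel_w_def)
  then show "kernel_w mu mv mw (\<lambda>k j x l. pw (eu k) (ev j) x (ew l))" using W by (simp add: kernel_w_def)
qed

lemma relabel_id [simp]: "relabel id id id \<omega> = \<omega>"
  by (cases \<omega>) simp

text \<open>The time-sharing scheme uses the first scheme on labels \<open>u < nu1\<close> and the second one,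
  shifted by \<open>nu1\<close>, above; \<open>share nu1 c\<close> weights the two halves by \<open>c\<close> and \<open>1 - c\<close>.\<close>

definition join :: "nat \<Rightarrow> (nat \<Rightarrow> 'a) \<Rightarrow> (nat \<Rightarrow> 'a) \<Rightarrow> nat \<Rightarrow> 'a"
  where "join n f g i = (if i < n then f i else g (i - n))"

definition share :: "nat \<Rightarrow> real \<Rightarrow> nat \<Rightarrow> real"
  where "share n c i = (if i < n then c else 1 - c)"

definition pad_v :: "nat \<Rightarrow> (nat \<Rightarrow> 'z \<Rightarrow> nat \<Rightarrow> real) \<Rightarrow> nat \<Rightarrow> 'z \<Rightarrow> nat \<Rightarrow> real"
  where "pad_v nv pv u z v = (if v < nv then pv u z v else 0)"

text \<open>Beyond the alphabet of \<open>V\<close> the kernel of \<open>W\<close> is irrelevant; a point mass keeps it stochastic.\<close>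

definition pad_w ::
  "nat \<Rightarrow> nat \<Rightarrow> (nat \<Rightarrow> nat \<Rightarrow> 'x \<Rightarrow> nat \<Rightarrow> real) \<Rightarrow> nat \<Rightarrow> nat \<Rightarrow> 'x \<Rightarrow> nat \<Rightarrow> real"
  where "pad_w nv nw pw u v x w =
    (if v < nv then if w < nw then pw u v x w else 0 else if w = 0 then 1 else 0)"

lemma sum_lessThan_add: "(\<Sum>i<m + n::nat. f i) = (\<Sum>i<m. f i) + (\<Sum>i<n. f (m + i))"
  by (induction n) (simp_all add: add.assoc)

lemma sum_lessThan_pad: "k \<le> (n::nat) \<Longrightarrow> (\<Sum>i<n. if i < k then f i else 0) = (\<Sum>i<k. f i)"
  by (rule sum.mono_neutral_cong_right) auto

lemma kernel_v_pad: "kernel_v nu nv pv \<Longrightarrow> nv \<le> nv' \<Longrightarrow> kernel_v nu nv' (pad_v nv pv)"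
  by (simp add: kernel_v_def pad_v_def sum_lessThan_pad)

lemma kernel_w_pad:
  assumes "kernel_w nu nv nw pw" "nv \<le> nv'" "nw \<le> nw'" "0 < nw'"
  shows "kernel_w nu nv' nw' (pad_w nv nw pw)"
proof -
  have "(\<Sum>w<nw'. pad_w nv nw pw u v x w) = 1" if "u < nu" for u v x
  proof (cases "v < nv")
    case True
    then show ?thesis using assms(1,3) that by (simp add: pad_w_def sum_lessThan_pad kernel_w_def)
  next
    case False
    then show ?thesis using assms(4) by (simp add: pad_w_def)
  qed
  then show ?thesis using assms(1) by (simp add: kernel_w_def pad_w_def)
qed

lemma kernel_v_join:
  "kernel_v nu1 nv pv1 \<Longrightarrow> kernel_v nu2 nv pv2 \<Longrightarrow> kernel_v (nu1 + nu2) nv (join nu1 pv1 pv2)"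
  by (auto simp: kernel_v_def join_def)

lemma kernel_w_join:
  "kernel_w nu1 nv nw pw1 \<Longrightarrow> kernel_w nu2 nv nw pw2 \<Longrightarrow> kernel_w (nu1 + nu2) nv nw (join nu1 pw1 pw2)"
  by (auto simp: kernel_w_def join_def)

lemma share_stochastic_weights:
  assumes "kernel_u nu1 pu1" "kernel_u nu2 pu2" "0 \<le> c" "c \<le> 1"
  shows "share nu1 c \<in> stochastic_weights (nu1 + nu2) UNIV (\<lambda>y. join nu1 (pu1 y) (pu2 y))"
  using assms by (simp add: stochastic_weights_def share_def join_def sum_lessThan_add kernel_u_def
      sum_distrib_left[symmetric])

lemma joint_reweight:
  "joint pxy pzx (\<lambda>y u. r u * pu y u) pv pw = (\<lambda>\<omega>. r (varU \<omega>) * joint pxy pzx pu pv pw \<omega>)"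
  "joint pxy pzx pu (\<lambda>u z v. r v * pv u z v) pw = (\<lambda>\<omega>. r (varV \<omega>) * joint pxy pzx pu pv pw \<omega>)"
  "joint pxy pzx pu pv (\<lambda>u v x w. r w * pw u v x w) = (\<lambda>\<omega>. r (varW \<omega>) * joint pxy pzx pu pv pw \<omega>)"
  by (simp_all add: fun_eq_iff joint_def varU_def varV_def varW_def split_beta mult_ac)

lemma kernel_reweight:
  "r \<in> stochastic_weights nu UNIV pu \<Longrightarrow> \<forall>y u. 0 \<le> pu y u \<Longrightarrow> kernel_u nu (\<lambda>y u. r u * pu y u)"
  "r \<in> stochastic_weights nv ({..<nu} \<times> UNIV) (\<lambda>(u, z) v. pv u z v) \<Longrightarrow> \<forall>u z v. 0 \<le> pv u z v \<Longrightarrow>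
    kernel_v nu nv (\<lambda>u z v. r v * pv u z v)"
  "r \<in> stochastic_weights nw ({..<nu} \<times> {..<nv} \<times> UNIV) (\<lambda>(u, v, x) w. pw u v x w) \<Longrightarrow>
    \<forall>u v x w. 0 \<le> pw u v x w \<Longrightarrow> kernel_w nu nv nw (\<lambda>u v x w. r w * pw u v x w)"
  by (simp_all add: stochastic_weights_def kernel_u_def kernel_v_def kernel_w_def)

lemma stochastic_weights_one:
  "kernel_u nu pu \<Longrightarrow> (\<lambda>_. 1) \<in> stochastic_weights nu UNIV pu"
  "kernel_v nu nv pv \<Longrightarrow> (\<lambda>_. 1) \<in> stochastic_weights nv ({..<nu} \<times> UNIV) (\<lambda>(u, z) v. pv u z v)"
  "kernel_w nu nv nw pw \<Longrightarrow>
    (\<lambda>_. 1) \<in> stochastic_weights nw ({..<nu} \<times> {..<nv} \<times> UNIV) (\<lambda>(u, v, x) w. pw u v x w)"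
  by (auto simp: stochastic_weights_def kernel_u_def kernel_v_def kernel_w_def)

lemma depends_on_support_reweight:
  fixes pxy :: "'x::finite \<Rightarrow> 'y::finite \<Rightarrow> real" and pzx :: "'x \<Rightarrow> 'z::finite \<Rightarrow> real"
  assumes "\<And>P P'. \<forall>\<omega>\<in>outcomes nu nv nw. P \<omega> = P' \<omega> \<Longrightarrow> \<Phi> P = \<Phi> P'"
  shows "depends_on_support nu UNIV pu (\<lambda>r. \<Phi> (joint pxy pzx (\<lambda>y u. r u * pu y u) pv pw))"
    and "depends_on_support nv ({..<nu} \<times> UNIV) (\<lambda>(u, z) v. pv u z v)
      (\<lambda>r. \<Phi> (joint pxy pzx pu (\<lambda>u z v. r v * pv u z v) pw))"
    and "depends_on_support nw ({..<nu} \<times> {..<nv} \<times> UNIV) (\<lambda>(u, v, x) w. pw u v x w)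
      (\<lambda>r. \<Phi> (joint pxy pzx pu pv (\<lambda>u v x w. r w * pw u v x w)))"
  unfolding depends_on_support_def
proof (safe intro!: assms)
  fix r r' :: "nat \<Rightarrow> real" and x :: 'x and y :: 'y and z :: 'z and u v w
  assume "(x,y,z,u,v,w) \<in> outcomes nu nv nw"
  then have \<omega>: "u < nu" "v < nv" "w < nw" by simp_all
  {
    assume "\<forall>i<nu. (\<exists>j\<in>UNIV. pu j i \<noteq> 0) \<longrightarrow> r i = r' i"
    then show "joint pxy pzx (\<lambda>y u. r u * pu y u) pv pw (x,y,z,u,v,w)
        = joint pxy pzx (\<lambda>y u. r' u * pu y u) pv pw (x,y,z,u,v,w)"
      using \<omega> by (cases "pu y u = 0") auto
  next
    assume "\<forall>i<nv. (\<exists>j\<in>{..<nu} \<times> UNIV. (case j of (u, z) \<Rightarrow> pv u z) i \<noteq> 0) \<longrightarrow> r i = r' i"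
    then show "joint pxy pzx pu (\<lambda>u z v. r v * pv u z v) pw (x,y,z,u,v,w)
        = joint pxy pzx pu (\<lambda>u z v. r' v * pv u z v) pw (x,y,z,u,v,w)"
      using \<omega> by (cases "pv u z v = 0") auto
  next
    assume "\<forall>i<nw. (\<exists>j\<in>{..<nu} \<times> {..<nv} \<times> UNIV. (case j of (u, v, x) \<Rightarrow> pw u v x) i \<noteq> 0)
      \<longrightarrow> r i = r' i"
    then show "joint pxy pzx pu pv (\<lambda>u v x w. r w * pw u v x w) (x,y,z,u,v,w)
        = joint pxy pzx pu pv (\<lambda>u v x w. r' w * pw u v x w) (x,y,z,u,v,w)"
      using \<omega> by (cases "pw u v x w = 0") auto
  }
qed

section \<open>Achievable rate triples\<close>

locale source_setup =
  fixes pxy :: "'x::finite \<Rightarrow> 'y::finite \<Rightarrow> real" and pzx :: "'x \<Rightarrow> 'z::finite \<Rightarrow> real"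
    and dx :: "'x \<Rightarrow> 'xh \<Rightarrow> real" and dz :: "'z \<Rightarrow> 'zh \<Rightarrow> real" and Dx Dz :: real
  assumes pxy_nonneg: "\<forall>x y. 0 \<le> pxy x y" and pzx_nonneg: "\<forall>x z. 0 \<le> pzx x z"
begin

definition loss_x :: "(nat \<Rightarrow> nat \<Rightarrow> 'z \<Rightarrow> 'xh) \<Rightarrow> 'x \<times> 'y \<times> 'z \<times> nat \<times> nat \<times> nat \<Rightarrow> real"
  where "loss_x xhat \<omega> = dx (varX \<omega>) (xhat (varU \<omega>) (varW \<omega>) (varZ \<omega>))"

definition loss_z :: "(nat \<Rightarrow> nat \<Rightarrow> 'x \<Rightarrow> 'zh) \<Rightarrow> 'x \<times> 'y \<times> 'z \<times> nat \<times> nat \<times> nat \<Rightarrow> real"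
  where "loss_z zhat \<omega> = dz (varZ \<omega>) (zhat (varU \<omega>) (varV \<omega>) (varX \<omega>))"

definition achieves ::
  "nat \<Rightarrow> nat \<Rightarrow> nat \<Rightarrow> ('y \<Rightarrow> nat \<Rightarrow> real) \<Rightarrow> (nat \<Rightarrow> 'z \<Rightarrow> nat \<Rightarrow> real)
    \<Rightarrow> (nat \<Rightarrow> nat \<Rightarrow> 'x \<Rightarrow> nat \<Rightarrow> real) \<Rightarrow> (nat \<Rightarrow> nat \<Rightarrow> 'z \<Rightarrow> 'xh) \<Rightarrow> (nat \<Rightarrow> nat \<Rightarrow> 'x \<Rightarrow> 'zh)
    \<Rightarrow> real \<Rightarrow> real \<Rightarrow> real \<Rightarrow> bool"
  where "achieves nu nv nw pu pv pw xhat zhat R1 R2 R3 \<longleftrightarrow>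
    kernel_u nu pu \<and> kernel_v nu nv pv \<and> kernel_w nu nv nw pw \<and>
    rate_u (outcomes nu nv nw) (joint pxy pzx pu pv pw) \<le> R1 \<and>
    rate_v (outcomes nu nv nw) (joint pxy pzx pu pv pw) \<le> R2 \<and>
    rate_w (outcomes nu nv nw) (joint pxy pzx pu pv pw) \<le> R3 \<and>
    expect (outcomes nu nv nw) (joint pxy pzx pu pv pw) (loss_x xhat) \<le> Dx \<and>
    expect (outcomes nu nv nw) (joint pxy pzx pu pv pw) (loss_z zhat) \<le> Dz"

lemma region_bd_achieves:
  "region_bd Bd pxy pzx dx dz Dx Dz = {(R1, R2, R3). \<exists>nu nv nw pu pv pw xhat zhat.
     Bd nu nv nw \<and> achieves nu nv nw pu pv pw xhat zhat R1 R2 R3}"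
  unfolding region_bd_def achieves_def kernel_u_def kernel_v_def kernel_w_def rate_u_def rate_v_def
    rate_w_def expect_def loss_x_def loss_z_def Let_def varX_def varY_def varZ_def varU_def varV_def
    varW_def
  by (simp only: conj_assoc)

lemma joint_nonneg:
  assumes "\<forall>y u. 0 \<le> pu y u" "\<forall>u z v. 0 \<le> pv u z v" "\<forall>u v x w. 0 \<le> pw u v x w"
  shows "0 \<le> joint pxy pzx pu pv pw \<omega>"
  using assms pxy_nonneg pzx_nonneg by (cases \<omega>) (auto intro!: mult_nonneg_nonneg)

lemma achieves_relabel:
  assumes ach: "achieves nu nv nw pu pv pw xhat zhat R1 R2 R3"
    and eu: "bij_betw eu {..<mu} Tu" "Tu \<subseteq> {..<nu}" "\<forall>y. \<forall>u<nu. u \<notin> Tu \<longrightarrow> pu y u = 0"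
    and ev: "bij_betw ev {..<mv} Tv" "Tv \<subseteq> {..<nv}" "\<forall>u<nu. \<forall>z. \<forall>v<nv. v \<notin> Tv \<longrightarrow> pv u z v = 0"
    and ew: "bij_betw ew {..<mw} Tw" "Tw \<subseteq> {..<nw}"
      "\<forall>u<nu. \<forall>v<nv. \<forall>x. \<forall>w<nw. w \<notin> Tw \<longrightarrow> pw u v x w = 0"
  shows "achieves mu mv mw (\<lambda>y k. pu y (eu k)) (\<lambda>k z j. pv (eu k) z (ev j))
    (\<lambda>k j x l. pw (eu k) (ev j) x (ew l)) (\<lambda>k l z. xhat (eu k) (ew l) z) (\<lambda>k j x. zhat (eu k) (ev j) x)
    R1 R2 R3"
proof -
  let ?h = "relabel eu ev ew :: 'x \<times> 'y \<times> 'z \<times> nat \<times> nat \<times> nat \<Rightarrow> _"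
  let ?P = "joint pxy pzx pu pv pw"
  have into: "eu ` {..<mu} \<subseteq> {..<nu}" "ev ` {..<mv} \<subseteq> {..<nv}" "ew ` {..<mw} \<subseteq> {..<nw}"
    using eu ev ew by (auto simp: bij_betw_def)
  have "?P \<omega> = 0" if "\<omega> \<in> outcomes nu nv nw - ?h ` outcomes mu mv mw" for \<omega>
  proof -
    obtain x y z u v w where \<omega>: "\<omega> = (x,y,z,u,v,w)" by (cases \<omega>)
    have "\<not> (u \<in> Tu \<and> v \<in> Tv \<and> w \<in> Tw)"
    proof
      assume "u \<in> Tu \<and> v \<in> Tv \<and> w \<in> Tw"
      then obtain k j l where "k < mu" "j < mv" "l < mw" "u = eu k" "v = ev j" "w = ew l"
        using eu(1) ev(1) ew(1) by (auto simp: bij_betw_def)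
      then have "\<omega> = ?h (x,y,z,k,j,l)" "(x,y,z,k,j,l) \<in> outcomes mu mv mw" using \<omega> by simp_all
      then show False using that by blast
    qed
    then show ?thesis using that eu(3) ev(3) ew(3) \<omega> by auto
  qed
  then have zero: "\<forall>\<omega>\<in>outcomes nu nv nw - ?h ` outcomes mu mv mw. ?P \<omega> = 0" by blast
  have "\<forall>\<omega>\<in>outcomes mu mv mw. joint pxy pzx (\<lambda>y k. pu y (eu k)) (\<lambda>k z j. pv (eu k) z (ev j))
      (\<lambda>k j x l. pw (eu k) (ev j) x (ew l)) \<omega> = ?P (?h \<omega>)" by auto
  note inv = relabel_invariant[OF bij_betw_imp_inj_on[OF eu(1)] bij_betw_imp_inj_on[OF ev(1)]
      bij_betw_imp_inj_on[OF ew(1)] into zero this]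
  show ?thesis
    using ach kernel_relabel[OF _ _ _ eu ev ew] unfolding achieves_def
    by (simp add: inv(1-3) inv(4)[where f = "loss_x xhat"] inv(4)[where f = "loss_z zhat"] loss_x_def loss_z_def)
qed

lemma affine_reweight_u:
  assumes pu: "\<forall>y u. 0 \<le> pu y u" and V: "kernel_v nu nv pv" and W: "kernel_w nu nv nw pw"
  defines "Q \<equiv> \<lambda>r. joint pxy pzx (\<lambda>y u. r u * pu y u) pv pw" and "Om \<equiv> outcomes nu nv nw"
    and "Rs \<equiv> stochastic_weights nu UNIV pu"
  shows "affine_on_weights Rs {..<nu} (\<lambda>r. rate_u Om (Q r))"
    and "affine_on_weights Rs {..<nu} (\<lambda>r. rate_v Om (Q r))"
    and "affine_on_weights Rs {..<nu} (\<lambda>r. rate_w Om (Q r))"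
    and "affine_on_weights Rs {..<nu} (\<lambda>r. expect Om (Q r) f)"
proof -
  let ?P = "joint pxy pzx pu pv pw"
  have Q: "Q r = (\<lambda>\<omega>. r (varU \<omega>) * ?P \<omega>)" for r by (simp add: Q_def joint_reweight)
  have fin: "finite Om" "finite {..<nu}" by (simp_all add: Om_def)
  have range: "varU ` Om \<subseteq> {..<nu}" by (auto simp: Om_def outcomes_def)
  have P: "\<forall>\<omega>\<in>Om. 0 \<le> ?P \<omega>" using pu V W by (simp add: joint_nonneg kernel_v_def kernel_w_def)
  have cone: "Rs \<subseteq> {r. \<forall>i. 0 \<le> r i}" by (auto simp: Rs_def stochastic_weights_def)
  \<comment> \<open>A stochastic reweighting of \<open>U\<close> leaves the law of \<open>(X, Y, Z)\<close> unchanged.\<close>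
  have marginal: "ent Om (Q r) X = ent Om (Q r') X"
    if "r \<in> Rs" "r' \<in> Rs" "\<forall>x y z u v w. X (x,y,z,u,v,w) = X (x,y,z,0,0,0)" for r r' and X :: "_ \<Rightarrow> 'a"
    unfolding Q_def Om_def
    by (rule ent_joint_indep_u[OF kernel_reweight(1) kernel_reweight(1) V V W W])
      (use that pu in \<open>simp_all add: Rs_def\<close>)
  have aff: "affine_on_weights Rs {..<nu} (\<lambda>r. rate_u Om (Q r)
      - (ent Om (Q r) (\<lambda>\<omega>. (varY \<omega>, varZ \<omega>)) - ent Om (Q r) varZ))"
    unfolding Q rate_u_def
    by (rule affine_on_weights_subset[OF cmi_reweight_affine[where g = id] cone]) (use fin range P in auto)
  have const: "ent Om (Q r) (\<lambda>\<omega>. (varY \<omega>, varZ \<omega>)) - ent Om (Q r) varZ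
      = ent Om (Q r') (\<lambda>\<omega>. (varY \<omega>, varZ \<omega>)) - ent Om (Q r') varZ" if "r \<in> Rs" "r' \<in> Rs" for r r'
    using marginal[OF that, of "\<lambda>\<omega>. (varY \<omega>, varZ \<omega>)"] marginal[OF that, of varZ] by simp
  show "affine_on_weights Rs {..<nu} (\<lambda>r. rate_u Om (Q r))"
    by (rule affine_on_weights_shift[OF aff]) (use const in blast)
  show "affine_on_weights Rs {..<nu} (\<lambda>r. rate_v Om (Q r))"
    unfolding Q rate_v_def using fin range P
    by (intro affine_on_weights_subset[OF cmi_reweight_cond_affine[where g = fst] cone]) auto
  show "affine_on_weights Rs {..<nu} (\<lambda>r. rate_w Om (Q r))"
    unfolding Q rate_w_def using fin range P
    by (intro affine_on_weights_subset[OF cmi_reweight_cond_affine[where g = fst] cone]) auto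
  show "affine_on_weights Rs {..<nu} (\<lambda>r. expect Om (Q r) f)"
    unfolding Q expect_def using fin range by (rule sum_reweight_affine)
qed

lemma affine_reweight_v:
  assumes U: "kernel_u nu pu" and pv: "\<forall>u z v. 0 \<le> pv u z v" and W: "kernel_w nu nv nw pw"
  defines "Q \<equiv> \<lambda>r. joint pxy pzx pu (\<lambda>u z v. r v * pv u z v) pw" and "Om \<equiv> outcomes nu nv nw"
    and "Rs \<equiv> stochastic_weights nv ({..<nu} \<times> UNIV) (\<lambda>(u, z) v. pv u z v)"
  shows "\<And>r r'. r \<in> Rs \<Longrightarrow> r' \<in> Rs \<Longrightarrow> rate_u Om (Q r) = rate_u Om (Q r')"
    and "affine_on_weights Rs {..<nv} (\<lambda>r. rate_v Om (Q r))"
    and "affine_on_weights Rs {..<nv} (\<lambda>r. rate_w Om (Q r))"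
    and "affine_on_weights Rs {..<nv} (\<lambda>r. expect Om (Q r) f)"
proof -
  let ?P = "joint pxy pzx pu pv pw"
  have Q: "Q r = (\<lambda>\<omega>. r (varV \<omega>) * ?P \<omega>)" for r by (simp add: Q_def joint_reweight)
  have fin: "finite Om" "finite {..<nv}" by (simp_all add: Om_def)
  have range: "varV ` Om \<subseteq> {..<nv}" by (auto simp: Om_def outcomes_def)
  have P: "\<forall>\<omega>\<in>Om. 0 \<le> ?P \<omega>" using U pv W by (simp add: joint_nonneg kernel_u_def kernel_w_def)
  have cone: "Rs \<subseteq> {r. \<forall>i. 0 \<le> r i}" by (auto simp: Rs_def stochastic_weights_def)
  have kernel: "kernel_v nu nv (\<lambda>u z v. r v * pv u z v)" if "r \<in> Rs" for r
    using kernel_reweight(2)[of r nv nu pv] that pv by (simp add: Rs_def)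
  have marginal: "ent Om (Q r) X = ent Om (Q r') X"
    if "r \<in> Rs" "r' \<in> Rs" "\<forall>x y z u v w. X (x,y,z,u,v,w) = X (x,y,z,u,0,0)" for r r' and X :: "_ \<Rightarrow> 'a"
    unfolding Q_def Om_def by (rule ent_joint_indep_v[OF kernel kernel W W]) (use that in simp_all)
  show "rate_u Om (Q r) = rate_u Om (Q r')" if "r \<in> Rs" "r' \<in> Rs" for r r'
    unfolding Q_def Om_def by (rule rate_u_indep_v[OF kernel[OF that(1)] kernel[OF that(2)] W W])
  have aff: "affine_on_weights Rs {..<nv} (\<lambda>r. rate_v Om (Q r)
      - (ent Om (Q r) (\<lambda>\<omega>. (varZ \<omega>, varU \<omega>, varX \<omega>)) - ent Om (Q r) (\<lambda>\<omega>. (varU \<omega>, varX \<omega>))))"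
    unfolding Q rate_v_def
    by (rule affine_on_weights_subset[OF cmi_reweight_affine[where g = id] cone]) (use fin range P in auto)
  have const: "ent Om (Q r) (\<lambda>\<omega>. (varZ \<omega>, varU \<omega>, varX \<omega>)) - ent Om (Q r) (\<lambda>\<omega>. (varU \<omega>, varX \<omega>))
      = ent Om (Q r') (\<lambda>\<omega>. (varZ \<omega>, varU \<omega>, varX \<omega>)) - ent Om (Q r') (\<lambda>\<omega>. (varU \<omega>, varX \<omega>))"
    if "r \<in> Rs" "r' \<in> Rs" for r r'
    using marginal[OF that, of "\<lambda>\<omega>. (varZ \<omega>, varU \<omega>, varX \<omega>)"]
      marginal[OF that, of "\<lambda>\<omega>. (varU \<omega>, varX \<omega>)"] by simp
  show "affine_on_weights Rs {..<nv} (\<lambda>r. rate_v Om (Q r))"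
    by (rule affine_on_weights_shift[OF aff]) (use const in blast)
  show "affine_on_weights Rs {..<nv} (\<lambda>r. rate_w Om (Q r))"
    unfolding Q rate_w_def using fin range P
    by (intro affine_on_weights_subset[OF cmi_reweight_cond_affine[where g = "\<lambda>c. fst (snd c)"] cone]) auto
  show "affine_on_weights Rs {..<nv} (\<lambda>r. expect Om (Q r) f)"
    unfolding Q expect_def using fin range by (rule sum_reweight_affine)
qed

lemma affine_reweight_w:
  fixes nw :: nat
  assumes U: "kernel_u nu pu" and V: "kernel_v nu nv pv" and pw: "\<forall>u v x w. 0 \<le> pw u v x w"
  defines "Q \<equiv> \<lambda>r. joint pxy pzx pu pv (\<lambda>u v x w. r w * pw u v x w)" and "Om \<equiv> outcomes nu nv nw"
    and "Rs \<equiv> stochastic_weights nw ({..<nu} \<times> {..<nv} \<times> UNIV) (\<lambda>(u, v, x) w. pw u v x w)"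
  shows "\<And>r r'. r \<in> Rs \<Longrightarrow> r' \<in> Rs \<Longrightarrow> rate_u Om (Q r) = rate_u Om (Q r')"
    and "\<And>r r'. r \<in> Rs \<Longrightarrow> r' \<in> Rs \<Longrightarrow> rate_v Om (Q r) = rate_v Om (Q r')"
    and "\<And>r r'. r \<in> Rs \<Longrightarrow> r' \<in> Rs \<Longrightarrow> \<forall>x y z u v w. g (x,y,z,u,v,w) = g (x,y,z,u,v,0) \<Longrightarrow>
      expect Om (Q r) g = expect Om (Q r') g"
    and "affine_on_weights Rs {..<nw} (\<lambda>r. rate_w Om (Q r))"
    and "affine_on_weights Rs {..<nw} (\<lambda>r. expect Om (Q r) f)"
proof -
  let ?P = "joint pxy pzx pu pv pw"
  have Q: "Q r = (\<lambda>\<omega>. r (varW \<omega>) * ?P \<omega>)" for r by (simp add: Q_def joint_reweight)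
  have fin: "finite Om" "finite {..<nw}" by (simp_all add: Om_def)
  have range: "varW ` Om \<subseteq> {..<nw}" by (auto simp: Om_def outcomes_def)
  have P: "\<forall>\<omega>\<in>Om. 0 \<le> ?P \<omega>" using U V pw by (simp add: joint_nonneg kernel_u_def kernel_v_def)
  have cone: "Rs \<subseteq> {r. \<forall>i. 0 \<le> r i}" by (auto simp: Rs_def stochastic_weights_def)
  have kernel: "kernel_w nu nv nw (\<lambda>u v x w. r w * pw u v x w)" if "r \<in> Rs" for r
    using kernel_reweight(3)[of r nw nu nv pw] that pw by (simp add: Rs_def)
  have marginal: "ent Om (Q r) X = ent Om (Q r') X"
    if "r \<in> Rs" "r' \<in> Rs" "\<forall>x y z u v w. X (x,y,z,u,v,w) = X (x,y,z,u,v,0)" for r r' and X :: "_ \<Rightarrow> 'a"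
    unfolding Q_def Om_def by (rule ent_joint_indep_w[OF kernel kernel]) (use that in simp_all)
  show "rate_u Om (Q r) = rate_u Om (Q r')" "rate_v Om (Q r) = rate_v Om (Q r')"
    if "r \<in> Rs" "r' \<in> Rs" for r r'
    unfolding Q_def Om_def by (rule rates_indep_w[OF kernel[OF that(1)] kernel[OF that(2)]])+
  show "expect Om (Q r) g = expect Om (Q r') g"
    if "r \<in> Rs" "r' \<in> Rs" "\<forall>x y z u v w. g (x,y,z,u,v,w) = g (x,y,z,u,v,0)" for r r'
    unfolding Q_def Om_def by (rule expect_indep_w[OF kernel[OF that(1)] kernel[OF that(2)] that(3)])
  have aff: "affine_on_weights Rs {..<nw} (\<lambda>r. rate_w Om (Q r)
      - (ent Om (Q r) (\<lambda>\<omega>. (varX \<omega>, varU \<omega>, varV \<omega>, varZ \<omega>))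
        - ent Om (Q r) (\<lambda>\<omega>. (varU \<omega>, varV \<omega>, varZ \<omega>))))"
    unfolding Q rate_w_def
    by (rule affine_on_weights_subset[OF cmi_reweight_affine[where g = id] cone]) (use fin range P in auto)
  have const: "ent Om (Q r) (\<lambda>\<omega>. (varX \<omega>, varU \<omega>, varV \<omega>, varZ \<omega>))
        - ent Om (Q r) (\<lambda>\<omega>. (varU \<omega>, varV \<omega>, varZ \<omega>))
      = ent Om (Q r') (\<lambda>\<omega>. (varX \<omega>, varU \<omega>, varV \<omega>, varZ \<omega>))
        - ent Om (Q r') (\<lambda>\<omega>. (varU \<omega>, varV \<omega>, varZ \<omega>))"
    if "r \<in> Rs" "r' \<in> Rs" for r r'
    using marginal[OF that, of "\<lambda>\<omega>. (varX \<omega>, varU \<omega>, varV \<omega>, varZ \<omega>)"]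
      marginal[OF that, of "\<lambda>\<omega>. (varU \<omega>, varV \<omega>, varZ \<omega>)"] by simp
  show "affine_on_weights Rs {..<nw} (\<lambda>r. rate_w Om (Q r))"
    by (rule affine_on_weights_shift[OF aff]) (use const in blast)
  show "affine_on_weights Rs {..<nw} (\<lambda>r. expect Om (Q r) f)"
    unfolding Q expect_def using fin range by (rule sum_reweight_affine)
qed

lemma reweight_u:
  assumes ach: "achieves nu nv nw pu pv pw xhat zhat R1 R2 R3"
  shows "\<exists>m. (\<forall>u. 0 \<le> m u) \<and> card {u\<in>{..<nu}. m u \<noteq> 0} \<le> CARD('y) + 4 \<and>
    achieves nu nv nw (\<lambda>y u. m u * pu y u) pv pw xhat zhat R1 R2 R3"
proof -
  have U: "kernel_u nu pu" and V: "kernel_v nu nv pv" and W: "kernel_w nu nv nw pw"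
    using ach by (simp_all add: achieves_def)
  have pu: "\<forall>y u. 0 \<le> pu y u" using U by (simp add: kernel_u_def)
  define Q where "Q = (\<lambda>r. joint pxy pzx (\<lambda>y u. r u * pu y u) pv pw)"
  define Om where "Om = (outcomes nu nv nw :: ('x \<times> 'y \<times> 'z \<times> nat \<times> nat \<times> nat) set)"
  define Rs where "Rs = stochastic_weights nu UNIV pu"
  define Gs where "Gs = {\<lambda>r. rate_v Om (Q r), \<lambda>r. rate_w Om (Q r),
    \<lambda>r. expect Om (Q r) (loss_x xhat), \<lambda>r. expect Om (Q r) (loss_z zhat)}"
  have aff: "affine_on_weights Rs {..<nu} (\<lambda>r. rate_u Om (Q r))"
    "affine_on_weights Rs {..<nu} (\<lambda>r. rate_v Om (Q r))"
    "affine_on_weights Rs {..<nu} (\<lambda>r. rate_w Om (Q r))"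
    "\<And>f. affine_on_weights Rs {..<nu} (\<lambda>r. expect Om (Q r) f)"
    unfolding Q_def Om_def Rs_def by (rule affine_reweight_u[OF pu V W])+
  have supp: "depends_on_support nu UNIV pu (\<lambda>r. \<Phi> (Q r))"
    if "\<And>P P'. \<forall>\<omega>\<in>Om. P \<omega> = P' \<omega> \<Longrightarrow> \<Phi> P = \<Phi> P'" for \<Phi>
    unfolding Q_def by (rule depends_on_support_reweight(1)) (use that in \<open>simp add: Om_def\<close>)
  have supp_rates: "depends_on_support nu UNIV pu (\<lambda>r. rate_u Om (Q r))"
    "depends_on_support nu UNIV pu (\<lambda>r. rate_v Om (Q r))"
    "depends_on_support nu UNIV pu (\<lambda>r. rate_w Om (Q r))"
    "\<And>f. depends_on_support nu UNIV pu (\<lambda>r. expect Om (Q r) f)"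
    by (rule supp, erule rates_cong)+
  have "\<forall>G\<in>Gs. affine_on_weights Rs {..<nu} G \<and> depends_on_support nu UNIV pu G"
    unfolding Gs_def using aff supp_rates by simp
  then obtain m where m: "m \<in> Rs" "card {u\<in>{..<nu}. m u \<noteq> 0} \<le> CARD('y) + card Gs"
      "rate_u Om (Q m) \<le> rate_u Om (Q (\<lambda>_. 1))" "\<forall>G\<in>Gs. G m = G (\<lambda>_. 1)"
    using caratheodory_reweighting[where J = UNIV and Gs = Gs and q = pu and n = nu
        and F = "\<lambda>r. rate_u Om (Q r)"] aff(1) supp_rates(1)
      stochastic_weights_one(1)[OF U] pu unfolding Rs_def by (auto simp: Gs_def)
  have "Q (\<lambda>_. 1) = joint pxy pzx pu pv pw" by (simp add: Q_def)
  moreover have "card Gs \<le> 4"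
    using card_length[of "[\<lambda>r. rate_v Om (Q r), \<lambda>r. rate_w Om (Q r),
        \<lambda>r. expect Om (Q r) (loss_x xhat), \<lambda>r. expect Om (Q r) (loss_z zhat)]"] by (simp add: Gs_def)
  moreover have "kernel_u nu (\<lambda>y u. m u * pu y u)" using kernel_reweight(1) m(1) pu by (simp add: Rs_def)
  ultimately show ?thesis
    using m ach unfolding achieves_def Om_def[symmetric]
    by (intro exI[of _ m]) (auto simp: Rs_def stochastic_weights_def Gs_def Q_def)
qed

lemma reweight_v:
  assumes ach: "achieves nu nv nw pu pv pw xhat zhat R1 R2 R3"
  shows "\<exists>m. (\<forall>v. 0 \<le> m v) \<and> card {v\<in>{..<nv}. m v \<noteq> 0} \<le> CARD('z) * nu + 3 \<and>
    achieves nu nv nw pu (\<lambda>u z v. m v * pv u z v) pw xhat zhat R1 R2 R3"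
proof -
  have U: "kernel_u nu pu" and V: "kernel_v nu nv pv" and W: "kernel_w nu nv nw pw"
    using ach by (simp_all add: achieves_def)
  have pv: "\<forall>u z v. 0 \<le> pv u z v" using V by (simp add: kernel_v_def)
  define Q where "Q = (\<lambda>r. joint pxy pzx pu (\<lambda>u z v. r v * pv u z v) pw)"
  define Om where "Om = (outcomes nu nv nw :: ('x \<times> 'y \<times> 'z \<times> nat \<times> nat \<times> nat) set)"
  define J where "J = {..<nu} \<times> (UNIV :: 'z set)"
  define Rs where "Rs = stochastic_weights nv J (\<lambda>(u, z) v. pv u z v)"
  define Gs where "Gs = {\<lambda>r. rate_w Om (Q r), \<lambda>r. expect Om (Q r) (loss_x xhat),
    \<lambda>r. expect Om (Q r) (loss_z zhat)}"
  have aff: "\<And>r r'. r \<in> Rs \<Longrightarrow> r' \<in> Rs \<Longrightarrow> rate_u Om (Q r) = rate_u Om (Q r')"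
    "affine_on_weights Rs {..<nv} (\<lambda>r. rate_v Om (Q r))"
    "affine_on_weights Rs {..<nv} (\<lambda>r. rate_w Om (Q r))"
    "\<And>f. affine_on_weights Rs {..<nv} (\<lambda>r. expect Om (Q r) f)"
    unfolding Q_def Om_def Rs_def J_def by (rule affine_reweight_v[OF U pv W]; assumption)+
  have supp: "depends_on_support nv J (\<lambda>(u, z) v. pv u z v) (\<lambda>r. \<Phi> (Q r))"
    if "\<And>P P'. \<forall>\<omega>\<in>Om. P \<omega> = P' \<omega> \<Longrightarrow> \<Phi> P = \<Phi> P'" for \<Phi>
    unfolding Q_def J_def by (rule depends_on_support_reweight(2)) (use that in \<open>simp add: Om_def\<close>)
  have supp_rates: "depends_on_support nv J (\<lambda>(u, z) v. pv u z v) (\<lambda>r. rate_v Om (Q r))"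
    "depends_on_support nv J (\<lambda>(u, z) v. pv u z v) (\<lambda>r. rate_w Om (Q r))"
    "\<And>f. depends_on_support nv J (\<lambda>(u, z) v. pv u z v) (\<lambda>r. expect Om (Q r) f)"
    by (rule supp, erule rates_cong)+
  have "\<forall>G\<in>Gs. affine_on_weights Rs {..<nv} G \<and> depends_on_support nv J (\<lambda>(u, z) v. pv u z v) G"
    unfolding Gs_def using aff supp_rates by simp
  then obtain m where m: "m \<in> Rs" "card {v\<in>{..<nv}. m v \<noteq> 0} \<le> card J + card Gs"
      "rate_v Om (Q m) \<le> rate_v Om (Q (\<lambda>_. 1))" "\<forall>G\<in>Gs. G m = G (\<lambda>_. 1)"
    using caratheodory_reweighting[where J = J and Gs = Gs and q = "\<lambda>(u, z) v. pv u z v" and n = nv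
        and F = "\<lambda>r. rate_v Om (Q r)"] aff(2) supp_rates(1) stochastic_weights_one(2)[OF V] pv
    unfolding Rs_def J_def by (auto simp: Gs_def)
  have one: "(\<lambda>_. 1) \<in> Rs" using stochastic_weights_one(2)[OF V] by (simp add: Rs_def J_def)
  have "card J + card Gs \<le> CARD('z) * nu + 3"
    using card_length[of "[\<lambda>r. rate_w Om (Q r), \<lambda>r. expect Om (Q r) (loss_x xhat),
        \<lambda>r. expect Om (Q r) (loss_z zhat)]"]
    by (simp add: J_def Gs_def card_cartesian_product)
  moreover have "kernel_v nu nv (\<lambda>u z v. m v * pv u z v)"
    using kernel_reweight(2) m(1) pv by (simp add: Rs_def J_def)
  ultimately show ?thesis
    using m ach aff(1)[OF m(1) one] unfolding achieves_def Om_def[symmetric]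
    by (intro exI[of _ m]) (auto simp: Rs_def stochastic_weights_def Gs_def Q_def)
qed

lemma reweight_w:
  assumes ach: "achieves nu nv nw pu pv pw xhat zhat R1 R2 R3"
  shows "\<exists>m. (\<forall>w. 0 \<le> m w) \<and> card {w\<in>{..<nw}. m w \<noteq> 0} \<le> nu * nv * CARD('x) + 1 \<and>
    achieves nu nv nw pu pv (\<lambda>u v x w. m w * pw u v x w) xhat zhat R1 R2 R3"
proof -
  have U: "kernel_u nu pu" and V: "kernel_v nu nv pv" and W: "kernel_w nu nv nw pw"
    using ach by (simp_all add: achieves_def)
  have pw: "\<forall>u v x w. 0 \<le> pw u v x w" using W by (simp add: kernel_w_def)
  define Q where "Q = (\<lambda>r. joint pxy pzx pu pv (\<lambda>u v x w. r w * pw u v x w))"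
  define Om where "Om = (outcomes nu nv nw :: ('x \<times> 'y \<times> 'z \<times> nat \<times> nat \<times> nat) set)"
  define J where "J = {..<nu} \<times> {..<nv} \<times> (UNIV :: 'x set)"
  define Rs where "Rs = stochastic_weights nw J (\<lambda>(u, v, x) w. pw u v x w)"
  have aff: "\<And>r r'. r \<in> Rs \<Longrightarrow> r' \<in> Rs \<Longrightarrow> rate_u Om (Q r) = rate_u Om (Q r')"
    "\<And>r r'. r \<in> Rs \<Longrightarrow> r' \<in> Rs \<Longrightarrow> rate_v Om (Q r) = rate_v Om (Q r')"
    "\<And>r r'. r \<in> Rs \<Longrightarrow> r' \<in> Rs \<Longrightarrow> expect Om (Q r) (loss_z zhat) = expect Om (Q r') (loss_z zhat)"
    "affine_on_weights Rs {..<nw} (\<lambda>r. rate_w Om (Q r))"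
    "affine_on_weights Rs {..<nw} (\<lambda>r. expect Om (Q r) (loss_x xhat))"
    unfolding Q_def Om_def Rs_def J_def
    by (rule affine_reweight_w[OF U V pw]; (assumption | simp add: loss_z_def))+
  have supp: "depends_on_support nw J (\<lambda>(u, v, x) w. pw u v x w) (\<lambda>r. \<Phi> (Q r))"
    if "\<And>P P'. \<forall>\<omega>\<in>Om. P \<omega> = P' \<omega> \<Longrightarrow> \<Phi> P = \<Phi> P'" for \<Phi>
    unfolding Q_def J_def by (rule depends_on_support_reweight(3)) (use that in \<open>simp add: Om_def\<close>)
  have supp_rates: "depends_on_support nw J (\<lambda>(u, v, x) w. pw u v x w) (\<lambda>r. rate_w Om (Q r))"
    "depends_on_support nw J (\<lambda>(u, v, x) w. pw u v x w) (\<lambda>r. expect Om (Q r) (loss_x xhat))"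
    by (rule supp, erule rates_cong)+
  obtain m where m: "m \<in> Rs" "card {w\<in>{..<nw}. m w \<noteq> 0} \<le> card J + card {\<lambda>r. expect Om (Q r) (loss_x xhat)}"
      "rate_w Om (Q m) \<le> rate_w Om (Q (\<lambda>_. 1))"
      "expect Om (Q m) (loss_x xhat) = expect Om (Q (\<lambda>_. 1)) (loss_x xhat)"
    using caratheodory_reweighting[where J = J and Gs = "{\<lambda>r. expect Om (Q r) (loss_x xhat)}"
        and q = "\<lambda>(u, v, x) w. pw u v x w" and n = nw and F = "\<lambda>r. rate_w Om (Q r)"]
      aff(4,5) supp_rates stochastic_weights_one(3)[OF W] pw
    unfolding Rs_def J_def by auto
  have one: "(\<lambda>_. 1) \<in> Rs" using stochastic_weights_one(3)[OF W] by (simp add: Rs_def J_def)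
  have "card J + card {\<lambda>r. expect Om (Q r) (loss_x xhat)} = nu * nv * CARD('x) + 1"
    by (simp add: J_def card_cartesian_product)
  moreover have "kernel_w nu nv nw (\<lambda>u v x w. m w * pw u v x w)"
    using kernel_reweight(3) m(1) pw by (simp add: Rs_def J_def)
  ultimately show ?thesis
    using m ach aff(1-3)[OF m(1) one] unfolding achieves_def Om_def[symmetric]
    by (intro exI[of _ m]) (auto simp: Rs_def stochastic_weights_def Q_def)
qed

lemma reduce_u:
  assumes "achieves nu nv nw pu pv pw xhat zhat R1 R2 R3"
  obtains nu' pu' pv' pw' xhat' zhat'
  where "nu' \<le> CARD('y) + 4" "achieves nu' nv nw pu' pv' pw' xhat' zhat' R1 R2 R3"
proof -
  obtain m where m: "card {u\<in>{..<nu}. m u \<noteq> 0} \<le> CARD('y) + 4"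
    "achieves nu nv nw (\<lambda>y u. m u * pu y u) pv pw xhat zhat R1 R2 R3"
    using reweight_u[OF assms] by blast
  define T where "T = {u\<in>{..<nu}. m u \<noteq> 0}"
  obtain e where e: "bij_betw e {..<card T} T"
    using ex_bij_betw_nat_finite[of T] by (auto simp: T_def atLeast0LessThan)
  have "T \<subseteq> {..<nu}" "\<forall>y. \<forall>u<nu. u \<notin> T \<longrightarrow> m u * pu y u = 0" by (auto simp: T_def)
  moreover have "\<forall>u<nu. \<forall>z. \<forall>v<nv. v \<notin> {..<nv} \<longrightarrow> pv u z v = 0"
    "\<forall>u<nu. \<forall>v<nv. \<forall>x. \<forall>w<nw. w \<notin> {..<nw} \<longrightarrow> pw u v x w = 0" by simp_all
  ultimately show ?thesis
    using achieves_relabel[OF m(2) e _ _ bij_betw_id order_refl _ bij_betw_id order_refl] m(1)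
    by (auto simp: T_def intro: that)
qed

lemma reduce_v:
  assumes "achieves nu nv nw pu pv pw xhat zhat R1 R2 R3"
  obtains nv' pu' pv' pw' xhat' zhat'
  where "nv' \<le> CARD('z) * nu + 3" "achieves nu nv' nw pu' pv' pw' xhat' zhat' R1 R2 R3"
proof -
  obtain m where m: "card {v\<in>{..<nv}. m v \<noteq> 0} \<le> CARD('z) * nu + 3"
    "achieves nu nv nw pu (\<lambda>u z v. m v * pv u z v) pw xhat zhat R1 R2 R3"
    using reweight_v[OF assms] by blast
  define T where "T = {v\<in>{..<nv}. m v \<noteq> 0}"
  obtain e where e: "bij_betw e {..<card T} T"
    using ex_bij_betw_nat_finite[of T] by (auto simp: T_def atLeast0LessThan)
  have "T \<subseteq> {..<nv}" "\<forall>u<nu. \<forall>z. \<forall>v<nv. v \<notin> T \<longrightarrow> m v * pv u z v = 0" by (auto simp: T_def)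
  moreover have "\<forall>y. \<forall>u<nu. u \<notin> {..<nu} \<longrightarrow> pu y u = 0"
    "\<forall>u<nu. \<forall>v<nv. \<forall>x. \<forall>w<nw. w \<notin> {..<nw} \<longrightarrow> pw u v x w = 0" by simp_all
  ultimately show ?thesis
    using achieves_relabel[OF m(2) bij_betw_id order_refl _ e _ _ bij_betw_id order_refl] m(1)
    by (auto simp: T_def intro: that)
qed

lemma reduce_w:
  assumes "achieves nu nv nw pu pv pw xhat zhat R1 R2 R3"
  obtains nw' pu' pv' pw' xhat' zhat'
  where "nw' \<le> nu * nv * CARD('x) + 1" "achieves nu nv nw' pu' pv' pw' xhat' zhat' R1 R2 R3"
proof -
  obtain m where m: "card {w\<in>{..<nw}. m w \<noteq> 0} \<le> nu * nv * CARD('x) + 1"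
    "achieves nu nv nw pu pv (\<lambda>u v x w. m w * pw u v x w) xhat zhat R1 R2 R3"
    using reweight_w[OF assms] by blast
  define T where "T = {w\<in>{..<nw}. m w \<noteq> 0}"
  obtain e where e: "bij_betw e {..<card T} T"
    using ex_bij_betw_nat_finite[of T] by (auto simp: T_def atLeast0LessThan)
  have "T \<subseteq> {..<nw}" "\<forall>u<nu. \<forall>v<nv. \<forall>x. \<forall>w<nw. w \<notin> T \<longrightarrow> m w * pw u v x w = 0"
    by (auto simp: T_def)
  moreover have "\<forall>y. \<forall>u<nu. u \<notin> {..<nu} \<longrightarrow> pu y u = 0"
    "\<forall>u<nu. \<forall>z. \<forall>v<nv. v \<notin> {..<nv} \<longrightarrow> pv u z v = 0" by simp_all
  ultimately show ?thesis
    using achieves_relabel[OF m(2) bij_betw_id order_refl _ bij_betw_id order_refl _ e] m(1)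
    by (auto simp: T_def intro: that)
qed

lemma achieves_bounded_alphabets:
  assumes "achieves nu nv nw pu pv pw xhat zhat R1 R2 R3"
  shows "\<exists>nu nv nw pu pv pw xhat zhat. (nu \<le> CARD('y) + 4 \<and> nv \<le> CARD('z) * nu + 3 \<and>
    nw \<le> nu * nv * CARD('x) + 1) \<and> achieves nu nv nw pu pv pw xhat zhat R1 R2 R3"
proof -
  obtain nu1 pu1 pv1 pw1 xhat1 zhat1 where 1: "nu1 \<le> CARD('y) + 4"
    "achieves nu1 nv nw pu1 pv1 pw1 xhat1 zhat1 R1 R2 R3"
    using reduce_u[OF assms] .
  obtain nv2 pu2 pv2 pw2 xhat2 zhat2 where 2: "nv2 \<le> CARD('z) * nu1 + 3"
    "achieves nu1 nv2 nw pu2 pv2 pw2 xhat2 zhat2 R1 R2 R3"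
    using reduce_v[OF 1(2)] .
  obtain nw3 pu3 pv3 pw3 xhat3 zhat3 where 3: "nw3 \<le> nu1 * nv2 * CARD('x) + 1"
    "achieves nu1 nv2 nw3 pu3 pv3 pw3 xhat3 zhat3 R1 R2 R3"
    using reduce_w[OF 2(2)] .
  from 1(1) 2(1) 3 show ?thesis by blast
qed

lemma achieves_convex_reweight_u:
  assumes "achieves nu nv nw (\<lambda>y u. r1 u * pu y u) pv pw xhat zhat A1 A2 A3"
    and "achieves nu nv nw (\<lambda>y u. r2 u * pu y u) pv pw xhat zhat B1 B2 B3"
    and pu: "\<forall>y u. 0 \<le> pu y u" and r: "\<forall>i. 0 \<le> r1 i" "\<forall>i. 0 \<le> r2 i"
    and ab: "0 \<le> a" "0 \<le> b" "a + b = 1"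
  shows "achieves nu nv nw (\<lambda>y u. (a * r1 u + b * r2 u) * pu y u) pv pw xhat zhat
    (a * A1 + b * B1) (a * A2 + b * B2) (a * A3 + b * B3)"
proof -
  let ?Rs = "stochastic_weights nu UNIV pu"
  let ?Q = "\<lambda>r. joint pxy pzx (\<lambda>y u. r u * pu y u) pv pw"
  let ?Om = "outcomes nu nv nw :: ('x \<times> 'y \<times> 'z \<times> nat \<times> nat \<times> nat) set"
  let ?r = "\<lambda>i. a * r1 i + b * r2 i"
  have V: "kernel_v nu nv pv" and W: "kernel_w nu nv nw pw" using assms(1) by (simp_all add: achieves_def)
  have "r1 \<in> ?Rs" "r2 \<in> ?Rs" using assms(1,2) r by (simp_all add: achieves_def kernel_u_def stochastic_weights_def)
  moreover from this have "?r \<in> ?Rs"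
    using ab by (simp add: stochastic_weights_def algebra_simps sum.distrib sum_distrib_left[symmetric])
  ultimately have comb: "F (?r) = a * F r1 + b * F r2" if "affine_on_weights ?Rs {..<nu} F" for F
    using affine_on_weights_convex_combination[OF that _ _ _ ab(3)] by blast
  note aff = affine_reweight_u[OF pu V W]
  have mono: "a * p + b * q \<le> a * P + b * Q" if "p \<le> P" "q \<le> Q" for p q P Q :: real
    using ab that by (intro add_mono mult_left_mono) auto
  have "kernel_u nu (\<lambda>y u. ?r u * pu y u)"
    using kernel_reweight(1)[OF \<open>?r \<in> ?Rs\<close> pu] .
  moreover have "a * Dx + b * Dx = Dx" "a * Dz + b * Dz = Dz" using ab(3) by (metis distrib_right mult_1)+
  ultimately show ?thesis
    using assms(1,2) V W mono comb[OF aff(1)] comb[OF aff(2)] comb[OF aff(3)]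
      comb[OF aff(4)[of "loss_x xhat"]] comb[OF aff(4)[of "loss_z zhat"]] unfolding achieves_def by (smt (verit))
qed

lemma time_sharing_first:
  fixes nu1 nv1 nw1 nu2 nv2 nw2 :: nat and pv1 pv2 :: "nat \<Rightarrow> 'z \<Rightarrow> nat \<Rightarrow> real"
    and pw1 pw2 :: "nat \<Rightarrow> nat \<Rightarrow> 'x \<Rightarrow> nat \<Rightarrow> real"
  defines "pv \<equiv> join nu1 (pad_v nv1 pv1) (pad_v nv2 pv2)" and "pw \<equiv> join nu1 (pad_w nv1 nw1 pw1) (pad_w nv2 nw2 pw2)"
  assumes ach: "achieves nu1 nv1 nw1 pu1 pv1 pw1 xh1 zh1 A1 A2 A3" and "kernel_u nu2 pu2"
    and V: "kernel_v (nu1 + nu2) (max nv1 nv2) pv" and W: "kernel_w (nu1 + nu2) (max nv1 nv2) (max nw1 nw2) pw"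
  shows "achieves (nu1 + nu2) (max nv1 nv2) (max nw1 nw2) (\<lambda>y u. share nu1 1 u * join nu1 (pu1 y) (pu2 y) u)
    pv pw (join nu1 xh1 xh2) (join nu1 zh1 zh2) A1 A2 A3"
proof -
  let ?P = "joint pxy pzx (\<lambda>y u. share nu1 1 u * join nu1 (pu1 y) (pu2 y) u) pv pw"
  let ?Om1 = "outcomes nu1 nv1 nw1 :: ('x \<times> 'y \<times> 'z \<times> nat \<times> nat \<times> nat) set"
  let ?Om = "outcomes (nu1 + nu2) (max nv1 nv2) (max nw1 nw2) :: ('x \<times> 'y \<times> 'z \<times> nat \<times> nat \<times> nat) set"
  have zero: "\<forall>\<omega>\<in>?Om - relabel id id id ` ?Om1. ?P \<omega> = 0"
    by (auto simp: pv_def pw_def share_def join_def pad_v_def pad_w_def)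
  have P: "\<forall>\<omega>\<in>?Om1. joint pxy pzx pu1 pv1 pw1 \<omega> = ?P (relabel id id id \<omega>)"
    by (auto simp: pv_def pw_def share_def join_def pad_v_def pad_w_def)
  have into: "id ` {..<nu1} \<subseteq> {..<nu1 + nu2}" "id ` {..<nv1} \<subseteq> {..<max nv1 nv2}"
    "id ` {..<nw1} \<subseteq> {..<max nw1 nw2}" by auto
  note inv = relabel_invariant[OF inj_on_id inj_on_id inj_on_id into zero P]
  have U: "kernel_u nu1 pu1" using ach by (simp add: achieves_def)
  have K: "kernel_u (nu1 + nu2) (\<lambda>y u. share nu1 1 u * join nu1 (pu1 y) (pu2 y) u)"
    using kernel_reweight(1)[OF share_stochastic_weights[OF U assms(4)]] U assms(4)
    by (simp add: kernel_u_def join_def)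
  have "expect ?Om1 (joint pxy pzx pu1 pv1 pw1) (loss_x xh1) = expect ?Om ?P (loss_x (join nu1 xh1 xh2))"
    "expect ?Om1 (joint pxy pzx pu1 pv1 pw1) (loss_z zh1) = expect ?Om ?P (loss_z (join nu1 zh1 zh2))"
    by (rule inv(4); simp add: split_paired_all loss_x_def loss_z_def join_def)+
  with ach K V W inv(1-3) show ?thesis unfolding achieves_def by simp
qed

lemma time_sharing_second:
  fixes nu1 nv1 nw1 nu2 nv2 nw2 :: nat and pv1 pv2 :: "nat \<Rightarrow> 'z \<Rightarrow> nat \<Rightarrow> real"
    and pw1 pw2 :: "nat \<Rightarrow> nat \<Rightarrow> 'x \<Rightarrow> nat \<Rightarrow> real"
  defines "pv \<equiv> join nu1 (pad_v nv1 pv1) (pad_v nv2 pv2)" and "pw \<equiv> join nu1 (pad_w nv1 nw1 pw1) (pad_w nv2 nw2 pw2)"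
  assumes ach: "achieves nu2 nv2 nw2 pu2 pv2 pw2 xh2 zh2 B1 B2 B3" and "kernel_u nu1 pu1"
    and V: "kernel_v (nu1 + nu2) (max nv1 nv2) pv" and W: "kernel_w (nu1 + nu2) (max nv1 nv2) (max nw1 nw2) pw"
  shows "achieves (nu1 + nu2) (max nv1 nv2) (max nw1 nw2) (\<lambda>y u. share nu1 0 u * join nu1 (pu1 y) (pu2 y) u)
    pv pw (join nu1 xh1 xh2) (join nu1 zh1 zh2) B1 B2 B3"
proof -
  let ?P = "joint pxy pzx (\<lambda>y u. share nu1 0 u * join nu1 (pu1 y) (pu2 y) u) pv pw"
  let ?Om2 = "outcomes nu2 nv2 nw2 :: ('x \<times> 'y \<times> 'z \<times> nat \<times> nat \<times> nat) set"
  let ?Om = "outcomes (nu1 + nu2) (max nv1 nv2) (max nw1 nw2) :: ('x \<times> 'y \<times> 'z \<times> nat \<times> nat \<times> nat) set"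
  let ?h = "relabel (\<lambda>u. nu1 + u) id id :: 'x \<times> 'y \<times> 'z \<times> nat \<times> nat \<times> nat \<Rightarrow> _"
  have zero: "\<forall>\<omega>\<in>?Om - ?h ` ?Om2. ?P \<omega> = 0"
  proof
    fix \<omega> assume \<omega>_in: "\<omega> \<in> ?Om - ?h ` ?Om2"
    obtain x y z u v w where \<omega>: "\<omega> = (x,y,z,u,v,w)" by (cases \<omega>)
    show "?P \<omega> = 0"
    proof (cases "u < nu1 \<or> \<not> (v < nv2 \<and> w < nw2)")
      case True
      then show ?thesis unfolding \<omega> by (auto simp: pv_def pw_def share_def join_def pad_v_def pad_w_def)
    next
      case False
      then have "\<omega> = ?h (x,y,z,u - nu1,v,w)" "(x,y,z,u - nu1,v,w) \<in> ?Om2"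
        using \<omega>_in unfolding \<omega> by auto
      then show ?thesis using \<omega>_in by blast
    qed
  qed
  have P: "\<forall>\<omega>\<in>?Om2. joint pxy pzx pu2 pv2 pw2 \<omega> = ?P (?h \<omega>)"
    by (auto simp: pv_def pw_def share_def join_def pad_v_def pad_w_def)
  have inj: "inj_on (\<lambda>u. nu1 + u) {..<nu2}" by simp
  have into: "(\<lambda>u. nu1 + u) ` {..<nu2} \<subseteq> {..<nu1 + nu2}" "id ` {..<nv2} \<subseteq> {..<max nv1 nv2}"
    "id ` {..<nw2} \<subseteq> {..<max nw1 nw2}" by auto
  note inv = relabel_invariant[OF inj inj_on_id inj_on_id into zero P]
  have U: "kernel_u nu2 pu2" using ach by (simp add: achieves_def)
  have K: "kernel_u (nu1 + nu2) (\<lambda>y u. share nu1 0 u * join nu1 (pu1 y) (pu2 y) u)"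
    using kernel_reweight(1)[OF share_stochastic_weights[OF assms(4) U]] U assms(4)
    by (simp add: kernel_u_def join_def)
  have "expect ?Om2 (joint pxy pzx pu2 pv2 pw2) (loss_x xh2) = expect ?Om ?P (loss_x (join nu1 xh1 xh2))"
    "expect ?Om2 (joint pxy pzx pu2 pv2 pw2) (loss_z zh2) = expect ?Om ?P (loss_z (join nu1 zh1 zh2))"
    by (rule inv(4); simp add: split_paired_all loss_x_def loss_z_def join_def)+
  with ach K V W inv(1-3) show ?thesis unfolding achieves_def by simp
qed

lemma achieves_nw_pos: "achieves nu nv nw pu pv pw xhat zhat R1 R2 R3 \<Longrightarrow> 0 < nw"
  unfolding achieves_def kernel_u_def kernel_v_def kernel_w_def
  by (metis lessThan_0 less_nat_zero_code neq0_conv sum.empty zero_neq_one)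

theorem achieves_time_sharing:
  assumes ach1: "achieves nu1 nv1 nw1 pu1 pv1 pw1 xh1 zh1 A1 A2 A3"
    and ach2: "achieves nu2 nv2 nw2 pu2 pv2 pw2 xh2 zh2 B1 B2 B3"
    and ab: "0 \<le> a" "0 \<le> b" "a + b = 1"
  shows "\<exists>nu nv nw pu pv pw xhat zhat.
    achieves nu nv nw pu pv pw xhat zhat (a * A1 + b * B1) (a * A2 + b * B2) (a * A3 + b * B3)"
proof -
  let ?pu = "\<lambda>y. join nu1 (pu1 y) (pu2 y)"
  let ?pv = "join nu1 (pad_v nv1 pv1) (pad_v nv2 pv2)"
  let ?pw = "join nu1 (pad_w nv1 nw1 pw1) (pad_w nv2 nw2 pw2)"
  have K1: "kernel_u nu1 pu1" "kernel_v nu1 nv1 pv1" "kernel_w nu1 nv1 nw1 pw1" and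
    K2: "kernel_u nu2 pu2" "kernel_v nu2 nv2 pv2" "kernel_w nu2 nv2 nw2 pw2"
    using ach1 ach2 by (simp_all add: achieves_def)
  have V: "kernel_v (nu1 + nu2) (max nv1 nv2) ?pv"
    by (intro kernel_v_join kernel_v_pad K1 K2) simp_all
  have W: "kernel_w (nu1 + nu2) (max nv1 nv2) (max nw1 nw2) ?pw"
    using achieves_nw_pos[OF ach1] by (intro kernel_w_join kernel_w_pad K1 K2) simp_all
  have pu: "\<forall>y u. 0 \<le> ?pu y u" using K1(1) K2(1) by (simp add: kernel_u_def join_def)
  have "achieves (nu1 + nu2) (max nv1 nv2) (max nw1 nw2)
      (\<lambda>y u. (a * share nu1 1 u + b * share nu1 0 u) * ?pu y u) ?pv ?pw (join nu1 xh1 xh2) (join nu1 zh1 zh2)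
      (a * A1 + b * B1) (a * A2 + b * B2) (a * A3 + b * B3)"
    by (rule achieves_convex_reweight_u[OF time_sharing_first[OF ach1 K2(1) V W]
          time_sharing_second[OF ach2 K1(1) V W] pu _ _ ab]) (simp_all add: share_def)
  then show ?thesis by blast
qed

end

theorem lemma1:
  fixes pxy :: "'x::finite \<Rightarrow> 'y::finite \<Rightarrow> real"
    and pzx :: "'x \<Rightarrow> 'z::finite \<Rightarrow> real"
    and dx :: "'x \<Rightarrow> 'xh::finite \<Rightarrow> real"
    and dz :: "'z \<Rightarrow> 'zh::finite \<Rightarrow> real"
    and Dx Dz :: real
  assumes "\<forall>x y. 0 \<le> pxy x y" and "(\<Sum>x\<in>UNIV. \<Sum>y\<in>UNIV. pxy x y) = 1"
    and "\<forall>x z. 0 \<le> pzx x z" and "\<forall>x. (\<Sum>z\<in>UNIV. pzx x z) = 1"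
    and "\<forall>x xh. 0 \<le> dx x xh" and "\<forall>z zh. 0 \<le> dz z zh"
  shows "convex (region pxy pzx dx dz Dx Dz)
    \<and> region pxy pzx dx dz Dx Dz =
      region_bd (\<lambda>nu nv nw. nu \<le> CARD('y) + 4 \<and> nv \<le> CARD('z) * nu + 3
                             \<and> nw \<le> nu * nv * CARD('x) + 1)
                pxy pzx dx dz Dx Dz"
proof -
  interpret source_setup pxy pzx dx dz Dx Dz
    using assms(1,3) by unfold_locales
  have region: "region pxy pzx dx dz Dx Dz = {(R1, R2, R3). \<exists>nu nv nw pu pv pw xhat zhat.
      achieves nu nv nw pu pv pw xhat zhat R1 R2 R3}"
    unfolding region_def region_bd_achieves by simp
  have "convex (region pxy pzx dx dz Dx Dz)"
  proof (rule convexI)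
    fix p q :: "real \<times> real \<times> real" and a b :: real
    assume "p \<in> region pxy pzx dx dz Dx Dz" "q \<in> region pxy pzx dx dz Dx Dz" "0 \<le> a" "0 \<le> b" "a + b = 1"
    then show "a *\<^sub>R p + b *\<^sub>R q \<in> region pxy pzx dx dz Dx Dz"
      unfolding region using achieves_time_sharing by (cases p, cases q) fastforce
  qed
  moreover have "region pxy pzx dx dz Dx Dz = region_bd (\<lambda>nu nv nw. nu \<le> CARD('y) + 4
      \<and> nv \<le> CARD('z) * nu + 3 \<and> nw \<le> nu * nv * CARD('x) + 1) pxy pzx dx dz Dx Dz"
    unfolding region region_bd_achieves using achieves_bounded_alphabets by blast
  ultimately show ?thesis ..
qed

end
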